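(* For every $M\in\Lambda^{001}$ the following are equivalent: (1) there exists $N\in\Lambda^{001}$ in head normal form such that $M\longrightarrow_\beta^\infty N$; (2) there exists $s\in\mathcal T(M)$ such that $\mathrm{nf}_r(s)\neq 0$; (3) there exists $N\in\Lambda^{001}$ in head normal form such that $M\longrightarrow_h^* N$.
   Context: $\Lambda^{001}$ is the set of possibly infinite λ-terms (trees of variables, abstractions $\lambda x.M$ and applications $(M)N$) whose infinite branches all enter infinitely often the argument position of an application, up to α-equivalence; $M[N/x]$ is capture-avoiding substitution; $\longrightarrow_\beta$ is the contextual closure (finite derivations) of $(\lambda x.M)N\longrightarrow_\beta M[N/x]$ and $\longrightarrow_\beta^*$ its reflexive-transitive closure. The infinitary reduction $\longrightarrow_\beta^\infty$ is defined by the rules below, with possibly infinite derivations in which every infinite branch passes infinitely often through the third premise of (@): (var) $M\longrightarrow_\beta^* x\Rightarrow M\longrightarrow_\beta^\infty x$; (λ) $M\longrightarrow_\beta^*\lambda x.P$, $P\longrightarrow_\beta^\infty P'$ $\Rightarrow M\longrightarrow_\beta^\infty\lambda x.P'$; (@) $M\longrightarrow_\beta^*(P)Q$, $P\longrightarrow_\beta^\infty P'$, $Q\longrightarrow_\beta^\infty Q'$ $\Rightarrow M\longrightarrow_\beta^\infty(P')Q'$. A term is in head normal form if it has the form $\lambda x_1\dots\lambda x_m.(\dots((y)Q_1)\dots)Q_n$; otherwise it has the form $\lambda x_1\dots\lambda x_m.(\dots((\lambda z.N)P)Q_1\dots)Q_n$ and its head reduct is $\lambda x_1\dots\lambda x_m.(\dots((N[P/z])Q_1)\dots)Q_n$;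 $\longrightarrow_h$ is head reduction and $\longrightarrow_h^*$ its reflexive-transitive closure. Resource terms: $s::=x\mid\lambda x.s\mid\langle s\rangle\bar t$, $\bar t$ a finite multiset of resource terms; finite sums are finite sets of resource terms ($0$ the empty sum). Resource reduction: $\longmapsto_r$ is the least relation from terms (resp. monomials) to finite sums containing $\langle\lambda x.s\rangle\bar t\longmapsto_r s\langle\bar t/x\rangle$ (where, for $\bar t=[t_1,\dots,t_n]$, $s\langle\bar t/x\rangle$ is the sum over $\sigma\in\mathfrak S_n$ of the linear substitutions of $t_{\sigma(i)}$ for the $i$-th free occurrence of $x$ if $x$ occurs exactly $n$ times freely in $s$, and $0$ otherwise) and closed under all term and monomial contexts; on finite sums, $\sum_{i=0}^n s_i\longrightarrow_r\sum_{i=0}^n T_i$ when $s_0\longmapsto_r T_0$ and each other $s_i$ either reduces to $T_i$ or equals it. This reduction is confluent and weakly normalising, and $\mathrm{nf}_r(s)$ denotes the normal form of $s$. Taylor approximation $\ltimes$ is inductive: $x\ltimes x$; $s\ltimes M\Rightarrow\lambda x.s\ltimes\lambda x.M$; ($s\ltimes M$ and $t_i\ltimes N$ for all $i$) $\Rightarrow\langle s\rangle[t_1,\dots,t_n]\ltimes(M)N$; $\mathcal T(M)=\{s : s\ltimes M\}$. *)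

theory Defs
  imports Main "HOL-Library.Multiset"
begin

section \<open>Possibly infinite lambda-terms (de Bruijn indices, so alpha-equivalence is built in)\<close>

codatatype tm = Var nat | Lam tm | App tm tm

primcorec lift :: "nat \<Rightarrow> tm \<Rightarrow> tm" where
  "lift k M = (case M of
      Var n \<Rightarrow> Var (if n < k then n else Suc n)
    | Lam P \<Rightarrow> Lam (lift (Suc k) P)
    | App P Q \<Rightarrow> App (lift k P) (lift k Q))"

text \<open>Capture-avoiding substitution of \<open>N\<close> for index \<open>k\<close> (binder removed: indices \<open>> k\<close> decremented).\<close>
primcorec subst :: "nat \<Rightarrow> tm \<Rightarrow> tm \<Rightarrow> tm" where
  "subst k N M = (case M of
      Var n \<Rightarrow> (if n = k then
                   (case N of Var j \<Rightarrow> Var j | Lam P \<Rightarrow> Lam P | App P Q \<Rightarrow> App P Q)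
                 else Var (if k < n then n - 1 else n))
    | Lam P \<Rightarrow> Lam (subst (Suc k) (lift 0 N) P)
    | App P Q \<Rightarrow> App (subst k N P) (subst k N Q))"

text \<open>\<open>M[N/x]\<close> where \<open>x\<close> is bound by the outermost abstraction (index 0).\<close>
definition subst0 :: "tm \<Rightarrow> tm \<Rightarrow> tm" where
  "subst0 M N = subst 0 N M"

datatype dir = DLam | DFun | DArg

primrec subterm_at :: "tm \<Rightarrow> dir list \<Rightarrow> tm option" where
  "subterm_at M [] = Some M"
| "subterm_at M (d # ds) = (case (d, M) of
      (DLam, Lam P) \<Rightarrow> subterm_at P ds
    | (DFun, App P Q) \<Rightarrow> subterm_at P ds
    | (DArg, App P Q) \<Rightarrow> subterm_at Q ds
    | _ \<Rightarrow> None)"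

text \<open>An infinite branch of \<open>M\<close> is an infinite sequence of directions all of whose finite
  prefixes are positions of \<open>M\<close>; it must enter argument position infinitely often.\<close>
definition Lambda001 :: "tm set" where
  "Lambda001 = {M. \<forall>f :: nat \<Rightarrow> dir.
      (\<forall>n. subterm_at M (map f [0..<n]) \<noteq> None) \<longrightarrow> (\<forall>n. \<exists>m\<ge>n. f m = DArg)}"

inductive beta :: "tm \<Rightarrow> tm \<Rightarrow> bool" where
  redex: "beta (App (Lam M) N) (subst0 M N)"
| lam: "beta M M' \<Longrightarrow> beta (Lam M) (Lam M')"
| appL: "beta M M' \<Longrightarrow> beta (App M N) (App M' N)"
| appR: "beta N N' \<Longrightarrow> beta (App M N) (App M N')"

abbreviation beta_star :: "tm \<Rightarrow> tm \<Rightarrow> bool" where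
  "beta_star \<equiv> beta\<^sup>*\<^sup>*"

subsection \<open>Infinitary beta-reduction (mixed inductive/coinductive: every infinite branch
  of a derivation passes infinitely often through the argument premise of (@))\<close>

inductive inf_step :: "(tm \<Rightarrow> tm \<Rightarrow> bool) \<Rightarrow> tm \<Rightarrow> tm \<Rightarrow> bool" for R where
  ivar: "beta_star M (Var x) \<Longrightarrow> inf_step R M (Var x)"
| ilam: "beta_star M (Lam P) \<Longrightarrow> inf_step R P P' \<Longrightarrow> inf_step R M (Lam P')"
| iapp: "beta_star M (App P Q) \<Longrightarrow> inf_step R P P' \<Longrightarrow> R Q Q' \<Longrightarrow> inf_step R M (App P' Q')"

lemma inf_step_mono[mono]:
  "(\<And>x y. R x y \<longrightarrow> S x y) \<Longrightarrow> inf_step R M N \<longrightarrow> inf_step S M N"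
proof
  assume H: "\<And>x y. R x y \<longrightarrow> S x y"
  assume "inf_step R M N"
  then show "inf_step S M N"
    by (induction rule: inf_step.induct) (auto intro: inf_step.intros H[rule_format])
qed

coinductive beta_inf :: "tm \<Rightarrow> tm \<Rightarrow> bool" where
  "inf_step beta_inf M N \<Longrightarrow> beta_inf M N"

inductive head_var_spine :: "tm \<Rightarrow> bool" where
  "head_var_spine (Var y)"
| "head_var_spine P \<Longrightarrow> head_var_spine (App P Q)"

inductive hnf :: "tm \<Rightarrow> bool" where
  "head_var_spine M \<Longrightarrow> hnf M"
| "hnf M \<Longrightarrow> hnf (Lam M)"

inductive hred :: "tm \<Rightarrow> tm \<Rightarrow> bool" where
  hredex: "hred (App (Lam N) P) (subst0 N P)"
| hlam: "hred M M' \<Longrightarrow> hred (Lam M) (Lam M')"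
| happ: "hred P P' \<Longrightarrow> \<not> is_Lam P \<Longrightarrow> hred (App P Q) (App P' Q)"

datatype rtm = RVar nat | RLam rtm | RApp rtm "rtm multiset"

text \<open>Finite sums are finite sets of resource terms; \<open>{}\<close> is the sum \<open>0\<close>.\<close>

primrec rlift :: "nat \<Rightarrow> rtm \<Rightarrow> rtm" where
  "rlift k (RVar n) = RVar (if n < k then n else Suc n)"
| "rlift k (RLam s) = RLam (rlift (Suc k) s)"
| "rlift k (RApp s ts) = RApp (rlift k s) (image_mset (rlift k) ts)"

text \<open>\<open>lsub k s ts s'\<close>: \<open>s'\<close> is one summand of the linear substitution \<open>s\<langle>ts/k\<rangle>\<close>, i.e. the
  elements of \<open>ts\<close> are distributed bijectively over the free occurrences of index \<open>k\<close>
  (the binder being removed). There is no summand if the count does not match.\<close>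
inductive lsub :: "nat \<Rightarrow> rtm \<Rightarrow> rtm multiset \<Rightarrow> rtm \<Rightarrow> bool"
  and lsub_ms :: "nat \<Rightarrow> rtm multiset \<Rightarrow> rtm multiset \<Rightarrow> rtm multiset \<Rightarrow> bool" where
  ls_hit: "lsub k (RVar k) {#t#} t"
| ls_miss: "n \<noteq> k \<Longrightarrow> lsub k (RVar n) {#} (RVar (if k < n then n - 1 else n))"
| ls_lam: "lsub (Suc k) s (image_mset (rlift 0) ts) s' \<Longrightarrow> lsub k (RLam s) ts (RLam s')"
| ls_app: "lsub k s ts1 s' \<Longrightarrow> lsub_ms k us ts2 us' \<Longrightarrow> lsub k (RApp s us) (ts1 + ts2) (RApp s' us')"
| lsm_empty: "lsub_ms k {#} {#} {#}"
| lsm_add: "lsub_ms k us ts1 us' \<Longrightarrow> lsub k u ts2 u' \<Longrightarrow>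
            lsub_ms k (add_mset u us) (ts1 + ts2) (add_mset u' us')"

definition lsubst :: "rtm \<Rightarrow> rtm multiset \<Rightarrow> rtm set" where
  "lsubst s ts = {s'. lsub 0 s ts s'}"

inductive rred :: "rtm \<Rightarrow> rtm set \<Rightarrow> bool" where
  rbase: "rred (RApp (RLam s) ts) (lsubst s ts)"
| rlam: "rred s T \<Longrightarrow> rred (RLam s) (RLam ` T)"
| rappL: "rred s T \<Longrightarrow> rred (RApp s ts) ((\<lambda>s'. RApp s' ts) ` T)"
| rappR: "rred t T \<Longrightarrow> rred (RApp s (add_mset t us)) ((\<lambda>t'. RApp s (add_mset t' us)) ` T)"

definition rsum_red :: "rtm set \<Rightarrow> rtm set \<Rightarrow> bool" where
  "rsum_red S S' \<longleftrightarrow> finite S \<and> (\<exists>s0\<in>S. \<exists>T0 T. rred s0 T0 \<and>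
      (\<forall>s\<in>S - {s0}. rred s (T s) \<or> T s = {s}) \<and>
      S' = T0 \<union> (\<Union>s\<in>S - {s0}. T s))"

definition rnormal :: "rtm set \<Rightarrow> bool" where
  "rnormal S \<longleftrightarrow> \<not> (\<exists>S'. rsum_red S S')"

text \<open>The resource normal form (well defined by confluence and weak normalisation).\<close>
definition nf_r :: "rtm \<Rightarrow> rtm set" where
  "nf_r s = (THE T. rsum_red\<^sup>*\<^sup>* {s} T \<and> rnormal T)"

inductive taylor :: "rtm \<Rightarrow> tm \<Rightarrow> bool" where
  "taylor (RVar x) (Var x)"
| "taylor s M \<Longrightarrow> taylor (RLam s) (Lam M)"
| "taylor s M \<Longrightarrow> (\<forall>t\<in>#ts. taylor t N) \<Longrightarrow> taylor (RApp s ts) (App M N)"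

definition Taylor :: "tm \<Rightarrow> rtm set" where
  "Taylor M = {s. taylor s M}"

end

theory Submission
  imports Defs
begin

text \<open>
  (1) \<open>\<Rightarrow>\<close> (2): a derivation of \<open>M \<longrightarrow>\<^sub>\<beta>\<^sup>\<infinity> N\<close> is inductive along the head spine of \<open>N\<close>, so a head
  normal form \<open>N\<close> is reached up to its head variable by finitely many \<open>\<beta>\<close>-steps. A head normal
  form has a normal Taylor approximant (all bags empty), and every approximant of a \<open>\<beta>\<close>-reduct
  of a term is reached, as a summand, by resource reduction from an approximant of the term.
  Resource reduction does not create normal forms, so the approximant of \<open>M\<close> obtained this way
  has a nonzero normal form.

  (2) \<open>\<Rightarrow>\<close> (3): a head step of \<open>M\<close> is simulated by one resource step of any approximant \<open>s\<close>,
  whose summands are approximants of the reduct, are smaller than \<open>s\<close>, and one of which still has a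
  nonzero normal form. Induction on the size of \<open>s\<close> bounds the length of the head reduction.

  (3) \<open>\<Rightarrow>\<close> (1): head reduction is \<open>\<beta>\<close>-reduction, it preserves \<open>\<Lambda>\<^sup>0\<^sup>0\<^sup>1\<close>, and every term of
  \<open>\<Lambda>\<^sup>0\<^sup>0\<^sup>1\<close> reduces infinitarily to itself.

  Since \<open>nf\<^sub>r\<close> is a definite description, confluence is needed: all reduction trees of a resource
  term have the same normal leaves, by induction on its size, the critical pairs being resolved
  by the substitution lemma for linear substitution.
\<close>

section \<open>Linear substitution in resource terms\<close>

lemma lsub_RVar_iff:
  "lsub k (RVar n) ts v \<longleftrightarrow>
     (n = k \<and> ts = {#v#}) \<or> (n \<noteq> k \<and> ts = {#} \<and> v = RVar (if k < n then n - 1 else n))"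
  using ls_miss[of n k] by (auto elim: lsub.cases intro: ls_hit)

lemma lsub_RLam_iff:
  "lsub k (RLam s) ts v
    \<longleftrightarrow> (\<exists>s'. v = RLam s' \<and> lsub (Suc k) s (image_mset (rlift 0) ts) s')"
  by (auto elim: lsub.cases intro: lsub_lsub_ms.intros)

lemma lsub_RApp_iff:
  "lsub k (RApp s us) ts v \<longleftrightarrow>
     (\<exists>ts1 ts2 s' us'. ts = ts1 + ts2 \<and> v = RApp s' us' \<and> lsub k s ts1 s' \<and> lsub_ms k us ts2 us')"
  by (blast elim: lsub.cases intro: lsub_lsub_ms.intros)

lemma lsub_ms_empty_iff: "lsub_ms k {#} ts vs \<longleftrightarrow> ts = {#} \<and> vs = {#}"
  by (auto elim: lsub_ms.cases intro: lsub_lsub_ms.intros)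

lemma add_mset_eq_union_cases:
  assumes "add_mset x N = A + B"
  shows "(x \<in># A \<and> N = (A - {#x#}) + B) \<or> (x \<in># B \<and> N = A + (B - {#x#}))"
proof -
  have "x \<in># A + B" using assms[symmetric] by simp
  then show ?thesis
    using assms by (metis add_mset_remove_trivial insert_DiffM union_iff
        union_mset_add_mset_left union_mset_add_mset_right)
qed

lemma lsub_ms_remove:
  "lsub_ms k us ts vs \<Longrightarrow> u \<in># us \<Longrightarrow>
   \<exists>ts1 ts2 u' vs'. ts = ts1 + ts2 \<and> lsub_ms k (us - {#u#}) ts1 vs' \<and> lsub k u ts2 u' \<and> vs = add_mset u' vs'"
proof (induction rule: lsub_lsub_ms.inducts(2)[where ?P1.0="\<lambda>_ _ _ _. True"])
  case (lsm_add k us ts1 us' x ts2 x')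
  show ?case
  proof (cases "u = x")
    case False
    then have "u \<in># us" using lsm_add by auto
    then obtain a b u'' w where ab: "ts1 = a + b" "lsub_ms k (us - {#u#}) a w" "lsub k u b u''"
      "us' = add_mset u'' w"
      using lsm_add by blast
    have "lsub_ms k (add_mset x (us - {#u#})) (a + ts2) (add_mset x' w)"
      using ab lsm_add by (auto intro: lsub_lsub_ms.intros)
    moreover have "add_mset x us - {#u#} = add_mset x (us - {#u#})" using False by auto
    ultimately show ?thesis using ab
      by (intro exI[of _ "a + ts2"] exI[of _ b] exI[of _ u''] exI[of _ "add_mset x' w"]) (auto simp: ac_simps)
  qed (use lsm_add in auto)
qed auto

lemma lsub_ms_add_mset_iff:
  "lsub_ms k (add_mset u us) ts vs \<longleftrightarrow>
     (\<exists>ts1 ts2 u' vs'. ts = ts1 + ts2 \<and> lsub_ms k us ts1 vs' \<and> lsub k u ts2 u' \<and> vs = add_mset u' vs')"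
  using lsub_ms_remove[of k "add_mset u us" ts vs u] by (auto intro: lsub_lsub_ms.intros)

lemma lsub_ms_singleton_iff:
  "lsub_ms k {#u#} ts vs \<longleftrightarrow> (\<exists>u'. lsub k u ts u' \<and> vs = {#u'#})"
  by (auto simp: lsub_ms_add_mset_iff lsub_ms_empty_iff)

lemma lsub_ms_size: "lsub_ms k us ts vs \<Longrightarrow> size vs = size us"
  by (induction rule: lsub_lsub_ms.inducts(2)[where ?P1.0="\<lambda>_ _ _ _. True"]) auto

lemma lsub_ms_result_empty_iff: "lsub_ms k us ts {#} \<longleftrightarrow> us = {#} \<and> ts = {#}"
  using lsub_ms_size[of k us ts "{#}"] by (auto simp: lsub_ms_empty_iff)

lemma lsub_ms_result_singleton_iff:
  "lsub_ms k us ts {#w#} \<longleftrightarrow> (\<exists>u. us = {#u#} \<and> lsub k u ts w)"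
proof
  assume a: "lsub_ms k us ts {#w#}"
  then have "size us = 1" using lsub_ms_size by fastforce
  then obtain u where "us = {#u#}" by (metis size_1_singleton_mset)
  then show "\<exists>u. us = {#u#} \<and> lsub k u ts w" using a by (auto simp: lsub_ms_singleton_iff)
qed (auto simp: lsub_ms_singleton_iff)

lemma lsub_ms_split_result:
  "lsub_ms k us ts vs \<Longrightarrow> vs = A + B \<Longrightarrow>
   \<exists>us1 us2 ts1 ts2. us = us1 + us2 \<and> ts = ts1 + ts2 \<and> lsub_ms k us1 ts1 A \<and> lsub_ms k us2 ts2 B"
proof (induction arbitrary: A B rule: lsub_lsub_ms.inducts(2)[where ?P1.0="\<lambda>_ _ _ _. True"])
  case (lsm_empty k)
  then show ?case by (auto intro: lsub_lsub_ms.intros)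
next
  case (lsm_add k us ts1 us' u ts2 u')
  from add_mset_eq_union_cases[OF lsm_add.prems]
  consider "u' \<in># A" "us' = (A - {#u'#}) + B" | "u' \<in># B" "us' = A + (B - {#u'#})" by blast
  then show ?case
  proof cases
    case 1
    then obtain M1 M2 t1 t2 where h: "us = M1 + M2" "ts1 = t1 + t2" "lsub_ms k M1 t1 (A - {#u'#})"
      "lsub_ms k M2 t2 B"
      using lsm_add.IH(1) by blast
    have "lsub_ms k (add_mset u M1) (t1 + ts2) (add_mset u' (A - {#u'#}))"
      using h lsm_add by (auto intro: lsub_lsub_ms.intros)
    then show ?thesis using h 1
      by (intro exI[of _ "add_mset u M1"] exI[of _ M2] exI[of _ "t1 + ts2"] exI[of _ t2]) (auto simp: ac_simps)
  next
    case 2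
    then obtain M1 M2 t1 t2 where h: "us = M1 + M2" "ts1 = t1 + t2" "lsub_ms k M1 t1 A"
      "lsub_ms k M2 t2 (B - {#u'#})"
      using lsm_add.IH(1) by blast
    have "lsub_ms k (add_mset u M2) (t2 + ts2) (add_mset u' (B - {#u'#}))"
      using h lsm_add by (auto intro: lsub_lsub_ms.intros)
    then show ?thesis using h 2
      by (intro exI[of _ M1] exI[of _ "add_mset u M2"] exI[of _ t1] exI[of _ "t2 + ts2"]) (auto simp: ac_simps)
  qed
qed auto

lemma lsub_ms_union:
  "lsub_ms k us1 ts1 vs1 \<Longrightarrow> lsub_ms k us2 ts2 vs2
    \<Longrightarrow> lsub_ms k (us1 + us2) (ts1 + ts2) (vs1 + vs2)"
proof (induction us2 arbitrary: ts2 vs2)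
  case empty
  then show ?case by (simp add: lsub_ms_empty_iff)
next
  case (add x us2)
  from add.prems(2) obtain a b x' w where h: "ts2 = a + b" "lsub_ms k us2 a w" "lsub k x b x'"
    "vs2 = add_mset x' w"
    by (auto simp: lsub_ms_add_mset_iff)
  have "lsub_ms k (us1 + us2) (ts1 + a) (vs1 + w)" using add.IH add.prems h by blast
  then have "lsub_ms k (add_mset x (us1 + us2)) ((ts1 + a) + b) (add_mset x' (vs1 + w))"
    using h by (auto intro: lsub_lsub_ms.intros)
  then show ?case using h by (simp add: ac_simps)
qed

lemma rlift_rlift: "i \<le> j \<Longrightarrow> rlift (Suc j) (rlift i t) = rlift i (rlift j t)"
  by (induction t arbitrary: i j) (auto simp: multiset.map_comp intro!: multiset.map_cong0)

lemma image_rlift0_rlift: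
  "image_mset (rlift 0) (image_mset (rlift j) ts) = image_mset (rlift (Suc j)) (image_mset (rlift 0) ts)"
  by (simp add: multiset.map_comp comp_def rlift_rlift)

lemma image_mset_eq_singleton_iff:
  "image_mset f M = {#x#} \<longleftrightarrow> (\<exists>y. M = {#y#} \<and> x = f y)"
proof
  assume a: "image_mset f M = {#x#}"
  then have "size M = 1" by (metis size_image_mset size_single)
  then obtain y where "M = {#y#}" by (metis size_1_singleton_mset)
  then show "\<exists>y. M = {#y#} \<and> x = f y" using a by auto
qed auto

text \<open>Index \<open>j\<close> does not occur in \<open>rlift j t\<close>.\<close>
lemma lsub_rlift_self_iff: "lsub j (rlift j t) ts w \<longleftrightarrow> ts = {#} \<and> w = t"
proof (induction t arbitrary: j ts w)
  case (RApp s us)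
  have "lsub_ms j (image_mset (rlift j) us') ts ws \<longleftrightarrow> ts = {#} \<and> ws = us'"
    if "us' \<subseteq># us" for us' ts ws
    using that
  proof (induction us' arbitrary: ts ws)
    case (add x us')
    then show ?case
      using RApp.IH(2)[of x]
      by (auto simp: lsub_ms_add_mset_iff dest: mset_subset_eq_insertD subset_mset.less_imp_le)
  qed (simp add: lsub_ms_empty_iff)
  then show ?case using RApp.IH(1) by (auto simp: lsub_RApp_iff)
qed (auto simp: lsub_RVar_iff lsub_RLam_iff)

lemma lsub_rlift_above:
  shows "lsub k s ts w \<Longrightarrow> k \<le> j
    \<Longrightarrow> lsub k (rlift (Suc j) s) (image_mset (rlift j) ts) (rlift j w)"
    and "lsub_ms k us ts ws \<Longrightarrow> k \<le> j \<Longrightarrow>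
         lsub_ms k (image_mset (rlift (Suc j)) us) (image_mset (rlift j) ts) (image_mset (rlift j) ws)"
  by (induction arbitrary: j and j rule: lsub_lsub_ms.inducts)
    (auto simp: lsub_RVar_iff lsub_RLam_iff lsub_RApp_iff image_rlift0_rlift intro: lsub_lsub_ms.intros)

lemma lsub_rlift_below:
  shows "lsub m s ts w \<Longrightarrow> i \<le> m
    \<Longrightarrow> lsub (Suc m) (rlift i s) (image_mset (rlift i) ts) (rlift i w)"
    and "lsub_ms m us ts ws \<Longrightarrow> i \<le> m \<Longrightarrow>
         lsub_ms (Suc m) (image_mset (rlift i) us) (image_mset (rlift i) ts) (image_mset (rlift i) ws)"
  by (induction arbitrary: i and i rule: lsub_lsub_ms.inducts)
    (auto simp: lsub_RVar_iff lsub_RLam_iff lsub_RApp_iff image_rlift0_rlift intro: lsub_lsub_ms.intros)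

lemma lsub_ms_image_elementwiseD:
  assumes "\<And>x C w. x \<in># us \<Longrightarrow> lsub k (f x) (image_mset g C) w
    \<Longrightarrow> \<exists>w0. lsub k' x C w0 \<and> w = g w0"
    and "lsub_ms k (image_mset f us) (image_mset g C) ws"
  shows "\<exists>ws0. lsub_ms k' us C ws0 \<and> ws = image_mset g ws0"
  using assms
proof (induction us arbitrary: C ws)
  case empty
  then show ?case by (auto simp: lsub_ms_empty_iff)
next
  case (add x us)
  from add.prems(2) obtain D1 D2 x' ws' where d: "image_mset g C = D1 + D2"
    "lsub_ms k (image_mset f us) D1 ws'" "lsub k (f x) D2 x'" "ws = add_mset x' ws'"
    by (auto simp: lsub_ms_add_mset_iff)
  then obtain E1 E2 where e: "C = E1 + E2" "D1 = image_mset g E1" "D2 = image_mset g E2"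
    using image_mset_eq_plusD by blast
  obtain ws0 where "lsub_ms k' us E1 ws0" "ws' = image_mset g ws0"
    using add.IH[of E1 ws'] add.prems(1) d e by auto
  moreover obtain x0 where "lsub k' x E2 x0" "x' = g x0" using add.prems(1)[of x E2 x'] d e by auto
  ultimately show ?case using d e by (auto intro!: exI[of _ "add_mset x0 ws0"] intro: lsub_lsub_ms.intros)
qed

lemma lsub_rlift_aboveD:
  "k \<le> j \<Longrightarrow> lsub k (rlift (Suc j) s) (image_mset (rlift j) ts) w
    \<Longrightarrow> \<exists>w0. lsub k s ts w0 \<and> w = rlift j w0"
proof (induction s arbitrary: k j ts w)
  case (RVar n)
  then show ?case
    by (cases "n = k")
      (auto simp: lsub_RVar_iff image_mset_eq_singleton_iff split: if_splits
        intro!: exI[of _ "RVar (if k < n then n - 1 else n)"])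
next
  case (RLam s)
  from RLam.prems obtain w' where w: "w = RLam w'"
    "lsub (Suc k) (rlift (Suc (Suc j)) s) (image_mset (rlift (Suc j)) (image_mset (rlift 0) ts)) w'"
    by (auto simp: lsub_RLam_iff image_rlift0_rlift)
  then obtain w0 where "lsub (Suc k) s (image_mset (rlift 0) ts) w0" "w' = rlift (Suc j) w0"
    using RLam.IH[of "Suc k" "Suc j"] RLam.prems by auto
  then show ?case using w by (auto simp: lsub_RLam_iff)
next
  case (RApp s us)
  from RApp.prems obtain B1 B2 s' ws where h: "image_mset (rlift j) ts = B1 + B2" "w = RApp s' ws"
    "lsub k (rlift (Suc j) s) B1 s'" "lsub_ms k (image_mset (rlift (Suc j)) us) B2 ws"
    by (auto simp: lsub_RApp_iff)
  then obtain C1 C2 where c: "ts = C1 + C2" "B1 = image_mset (rlift j) C1" "B2 = image_mset (rlift j) C2"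
    using image_mset_eq_plusD by blast
  obtain s0 where "lsub k s C1 s0" "s' = rlift j s0" using RApp.IH(1) RApp.prems h c by blast
  moreover obtain ws0 where "lsub_ms k us C2 ws0" "ws = image_mset (rlift j) ws0"
    using lsub_ms_image_elementwiseD[of us k "rlift (Suc j)" "rlift j" k] RApp.IH(2) RApp.prems(1) h c by blast
  ultimately show ?case using h c by (auto intro!: exI[of _ "RApp s0 ws0"] intro: lsub_lsub_ms.intros)
qed

lemma lsub_rlift_belowD:
  "i \<le> m \<Longrightarrow> lsub (Suc m) (rlift i s) (image_mset (rlift i) ts) w
    \<Longrightarrow> \<exists>w0. lsub m s ts w0 \<and> w = rlift i w0"
proof (induction s arbitrary: i m ts w)
  case (RVar n)
  then show ?case
    by (cases "n = m")
      (auto simp: lsub_RVar_iff image_mset_eq_singleton_iff split: if_splits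
        intro!: exI[of _ "RVar (if m < n then n - 1 else n)"])
next
  case (RLam s)
  from RLam.prems obtain w' where w: "w = RLam w'"
    "lsub (Suc (Suc m)) (rlift (Suc i) s) (image_mset (rlift (Suc i)) (image_mset (rlift 0) ts)) w'"
    by (auto simp: lsub_RLam_iff image_rlift0_rlift)
  then obtain w0 where "lsub (Suc m) s (image_mset (rlift 0) ts) w0" "w' = rlift (Suc i) w0"
    using RLam.IH[of "Suc i" "Suc m"] RLam.prems by auto
  then show ?case using w by (auto simp: lsub_RLam_iff)
next
  case (RApp s us)
  from RApp.prems obtain B1 B2 s' ws where h: "image_mset (rlift i) ts = B1 + B2" "w = RApp s' ws"
    "lsub (Suc m) (rlift i s) B1 s'" "lsub_ms (Suc m) (image_mset (rlift i) us) B2 ws"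
    by (auto simp: lsub_RApp_iff)
  then obtain C1 C2 where c: "ts = C1 + C2" "B1 = image_mset (rlift i) C1" "B2 = image_mset (rlift i) C2"
    using image_mset_eq_plusD by blast
  obtain s0 where "lsub m s C1 s0" "s' = rlift i s0" using RApp.IH(1) RApp.prems h c by blast
  moreover obtain ws0 where "lsub_ms m us C2 ws0" "ws = image_mset (rlift i) ws0"
    using lsub_ms_image_elementwiseD[of us "Suc m" "rlift i" "rlift i" m] RApp.IH(2) RApp.prems(1) h c by blast
  ultimately show ?case using h c by (auto intro!: exI[of _ "RApp s0 ws0"] intro: lsub_lsub_ms.intros)
qed

lemma lsub_ms_rlift_belowD:
  "i \<le> m \<Longrightarrow> lsub_ms (Suc m) (image_mset (rlift i) us) (image_mset (rlift i) ts) ws \<Longrightarrow>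
   \<exists>ws0. lsub_ms m us ts ws0 \<and> ws = image_mset (rlift i) ws0"
  using lsub_ms_image_elementwiseD[of us "Suc m" "rlift i" "rlift i" m] lsub_rlift_belowD by blast

text \<open>The two directions of the resource analogue of \<open>M[N/x][L/y] = M[L/y][N[L/y]/x]\<close>: the
  bag \<open>TS\<close> substituted for \<open>m\<close> is split between the body \<open>a\<close> and the bag \<open>BS\<close> substituted
  for \<open>j\<close>.\<close>

lemma lsub_ms_subst_merge_elementwise:
  assumes "\<And>x P Q M B a' w. x \<in># ds \<Longrightarrow> lsub (Suc m) x (image_mset (rlift j) P) a' \<Longrightarrow>
             lsub_ms m M Q B \<Longrightarrow> lsub j a' B w \<Longrightarrow> \<exists>u'. lsub j x M u' \<and> lsub m u' (P + Q) w"
    and "lsub_ms (Suc m) ds (image_mset (rlift j) P) ds'" "lsub_ms m M Q B" "lsub_ms j ds' B ws"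
  shows "\<exists>us'. lsub_ms j ds M us' \<and> lsub_ms m us' (P + Q) ws"
  using assms
proof (induction ds arbitrary: P M Q B ds' ws)
  case empty
  then show ?case by (auto simp: lsub_ms_empty_iff lsub_ms_result_empty_iff)
next
  case (add d ds)
  from add.prems(2) obtain X1 X2 e' d' where x: "image_mset (rlift j) P = X1 + X2"
    "lsub_ms (Suc m) ds X1 e'" "lsub (Suc m) d X2 d'" "ds' = add_mset d' e'"
      by (auto simp: lsub_ms_add_mset_iff)
  then obtain R1 R2 where r: "P = R1 + R2" "X1 = image_mset (rlift j) R1" "X2 = image_mset (rlift j) R2"
    using image_mset_eq_plusD by blast
  from add.prems(4) x obtain Y1 Y2 ws0 w' where y: "B = Y1 + Y2" "lsub_ms j e' Y1 ws0" "lsub j d' Y2 w'"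
    "ws = add_mset w' ws0"
    by (auto simp: lsub_ms_add_mset_iff)
  from lsub_ms_split_result[OF add.prems(3) y(1)] obtain N1 N2 Z1 Z2 where
    z: "M = N1 + N2" "Q = Z1 + Z2" "lsub_ms m N1 Z1 Y1" "lsub_ms m N2 Z2 Y2" by blast
  obtain us0 where us0: "lsub_ms j ds N1 us0" "lsub_ms m us0 (R1 + Z1) ws0"
    using add.IH[of R1 e' N1 Z1 Y1 ws0] x r y z add.prems(1) by auto
  obtain u where u: "lsub j d N2 u" "lsub m u (R2 + Z2) w'"
    using add.prems(1)[of d R2 d' N2 Z2 Y2 w'] x r y z by auto
  have "lsub_ms j (add_mset d ds) (N1 + N2) (add_mset u us0)" using us0 u by (auto intro: lsub_lsub_ms.intros)
  moreover have "lsub_ms m (add_mset u us0) ((R1 + Z1) + (R2 + Z2)) (add_mset w' ws0)"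
    using us0 u by (auto intro: lsub_lsub_ms.intros)
  ultimately show ?case using r z y by (auto simp: ac_simps)
qed

lemma lsub_subst_merge_RVar:
  assumes "j \<le> m" "lsub (Suc m) (RVar n) (image_mset (rlift j) TS1) a'" "lsub_ms m BS TS2 BS'"
    "lsub j a' BS' w"
  shows "\<exists>u'. lsub j (RVar n) BS u' \<and> lsub m u' (TS1 + TS2) w"
proof -
  consider "n = Suc m" | "n = j" | "n \<noteq> Suc m" "n \<noteq> j" by blast
  then show ?thesis
  proof cases
    case 1
    then obtain t1 where t: "TS1 = {#t1#}" "a' = rlift j t1" using assms(1,2)
      by (auto simp: lsub_RVar_iff image_mset_eq_singleton_iff)
    then have "BS' = {#}" "w = t1" using assms(4) by (auto simp: lsub_rlift_self_iff)
    then have "BS = {#}" "TS2 = {#}" using assms(3) by (auto simp: lsub_ms_result_empty_iff)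
    then show ?thesis using 1 t \<open>w = t1\<close> assms(1)
      by (auto simp: lsub_RVar_iff intro!: exI[of _ "RVar m"])
  next
    case 2
    then have "TS1 = {#}" "a' = RVar j" using assms(1,2) by (auto simp: lsub_RVar_iff)
    then have "BS' = {#w#}" using assms(4) by (auto simp: lsub_RVar_iff)
    then obtain b where "BS = {#b#}" "lsub m b TS2 w" using assms(3)
      by (auto simp: lsub_ms_result_singleton_iff)
    then show ?thesis using 2 \<open>TS1 = {#}\<close> by (auto simp: lsub_RVar_iff)
  next
    case 3
    then have h: "TS1 = {#}" "a' = RVar (if Suc m < n then n - 1 else n)" using assms(1,2)
      by (auto simp: lsub_RVar_iff)
    then have "BS' = {#}" using assms(1,4) 3 by (auto simp: lsub_RVar_iff split: if_splits)
    then have "BS = {#}" "TS2 = {#}" using assms(3) by (auto simp: lsub_ms_result_empty_iff)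
    then show ?thesis using 3 h assms(1,4) \<open>BS' = {#}\<close>
      by (auto simp: lsub_RVar_iff split: if_splits intro!: exI[of _ "RVar (if j < n then n - 1 else n)"])
  qed
qed

lemma lsub_subst_merge:
  "j \<le> m \<Longrightarrow> lsub (Suc m) a (image_mset (rlift j) TS1) a' \<Longrightarrow> lsub_ms m BS TS2 BS' \<Longrightarrow> lsub j a' BS' w \<Longrightarrow>
   \<exists>u'. lsub j a BS u' \<and> lsub m u' (TS1 + TS2) w"
proof (induction a arbitrary: j m TS1 BS TS2 BS' a' w)
  case (RVar n)
  then show ?case by (rule lsub_subst_merge_RVar)
next
  case (RLam b)
  from RLam.prems(2) obtain b' where b': "a' = RLam b'"
    "lsub (Suc (Suc m)) b (image_mset (rlift (Suc j)) (image_mset (rlift 0) TS1)) b'"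
    by (auto simp: lsub_RLam_iff image_rlift0_rlift)
  from RLam.prems(4) b' obtain w1 where w1: "w = RLam w1" "lsub (Suc j) b' (image_mset (rlift 0) BS') w1"
    by (auto simp: lsub_RLam_iff)
  have "lsub_ms (Suc m) (image_mset (rlift 0) BS) (image_mset (rlift 0) TS2) (image_mset (rlift 0) BS')"
    using lsub_rlift_below(2)[OF RLam.prems(3)] by simp
  from RLam.IH[OF _ b'(2) this w1(2)] RLam.prems(1) obtain u1 where
    "lsub (Suc j) b (image_mset (rlift 0) BS) u1"
    "lsub (Suc m) u1 (image_mset (rlift 0) TS1 + image_mset (rlift 0) TS2) w1"
    by auto
  then have "lsub j (RLam b) BS (RLam u1)" "lsub m (RLam u1) (TS1 + TS2) (RLam w1)"
    by (auto intro: lsub_lsub_ms.intros)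
  then show ?case using w1 by blast
next
  case (RApp c ds)
  from RApp.prems(2) obtain A1 A2 c' ds' where h: "image_mset (rlift j) TS1 = A1 + A2" "a' = RApp c' ds'"
    "lsub (Suc m) c A1 c'" "lsub_ms (Suc m) ds A2 ds'" by (auto simp: lsub_RApp_iff)
  then obtain P1 P2 where p: "TS1 = P1 + P2" "A1 = image_mset (rlift j) P1" "A2 = image_mset (rlift j) P2"
    using image_mset_eq_plusD by blast
  from RApp.prems(4) h obtain B1 B2 w1 ws where hw: "BS' = B1 + B2" "w = RApp w1 ws" "lsub j c' B1 w1"
    "lsub_ms j ds' B2 ws"
    by (auto simp: lsub_RApp_iff)
  from lsub_ms_split_result[OF RApp.prems(3) hw(1)] obtain M1 M2 Q1 Q2 where
    q: "BS = M1 + M2" "TS2 = Q1 + Q2" "lsub_ms m M1 Q1 B1" "lsub_ms m M2 Q2 B2" by blast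
  obtain u1 where u1: "lsub j c M1 u1" "lsub m u1 (P1 + Q1) w1"
    using RApp.IH(1)[of j m P1 c' M1 Q1 B1 w1] RApp.prems(1) h p q hw by blast
  obtain us' where us': "lsub_ms j ds M2 us'" "lsub_ms m us' (P2 + Q2) ws"
    using lsub_ms_subst_merge_elementwise[of ds m j P2 ds' M2 Q2 B2 ws] RApp.IH(2) RApp.prems(1) h p q hw
    by blast
  have "lsub j (RApp c ds) (M1 + M2) (RApp u1 us')" using u1 us' by (auto intro: lsub_lsub_ms.intros)
  moreover have "lsub m (RApp u1 us') ((P1 + Q1) + (P2 + Q2)) (RApp w1 ws)"
    using u1 us' by (auto intro: lsub_lsub_ms.intros)
  ultimately show ?case using p q hw by (auto simp: ac_simps)
qed

lemma lsub_ms_subst_split_elementwise: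
  assumes "\<And>x M u' T w. x \<in># ds \<Longrightarrow> lsub j x M u' \<Longrightarrow> lsub m u' T w \<Longrightarrow>
             \<exists>P Q a' B. T = P + Q \<and> lsub (Suc m) x (image_mset (rlift j) P) a' \<and> lsub_ms m M Q B \<and> lsub j a' B w"
    and "lsub_ms j ds M us" "lsub_ms m us T ws"
  shows "\<exists>P Q ds' B. T = P + Q \<and> lsub_ms (Suc m) ds (image_mset (rlift j) P) ds' \<and>
           lsub_ms m M Q B \<and> lsub_ms j ds' B ws"
  using assms
proof (induction ds arbitrary: M us T ws)
  case empty
  then show ?case by (auto simp: lsub_ms_empty_iff intro: lsub_lsub_ms.intros)
next
  case (add d ds)
  from add.prems(2) obtain N1 N2 us0 u where n: "M = N1 + N2" "lsub_ms j ds N1 us0" "lsub j d N2 u"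
    "us = add_mset u us0"
    by (auto simp: lsub_ms_add_mset_iff)
  from add.prems(3) n obtain Z1 Z2 ws0 w' where z: "T = Z1 + Z2" "lsub_ms m us0 Z1 ws0" "lsub m u Z2 w'"
    "ws = add_mset w' ws0"
    by (auto simp: lsub_ms_add_mset_iff)
  obtain P Q e' B where i: "Z1 = P + Q" "lsub_ms (Suc m) ds (image_mset (rlift j) P) e'" "lsub_ms m N1 Q B"
    "lsub_ms j e' B ws0"
    using add.IH[OF _ n(2) z(2)] add.prems(1) by auto
  obtain P' Q' d' B' where i2: "Z2 = P' + Q'" "lsub (Suc m) d (image_mset (rlift j) P') d'"
    "lsub_ms m N2 Q' B'" "lsub j d' B' w'"
    using add.prems(1)[OF _ n(3) z(3)] by auto
  have "lsub_ms (Suc m) (add_mset d ds) (image_mset (rlift j) (P + P')) (add_mset d' e')"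
    using i i2 by (auto intro: lsub_lsub_ms.intros)
  moreover have "lsub_ms m (N1 + N2) (Q + Q') (B + B')" using i i2 by (simp add: lsub_ms_union)
  moreover have "lsub_ms j (add_mset d' e') (B + B') (add_mset w' ws0)" using i i2
    by (auto intro: lsub_lsub_ms.intros)
  ultimately show ?case using n z i i2
    by (intro exI[of _ "P + P'"] exI[of _ "Q + Q'"] exI[of _ "add_mset d' e'"] exI[of _ "B + B'"]) (auto simp: ac_simps)
qed

lemma lsub_subst_split_RVar:
  assumes "j \<le> m" "lsub j (RVar n) BS u'" "lsub m u' TS w"
  shows "\<exists>TS1 TS2 a' BS'. TS = TS1 + TS2 \<and> lsub (Suc m) (RVar n) (image_mset (rlift j) TS1) a' \<and>
      lsub_ms m BS TS2 BS' \<and> lsub j a' BS' w"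
proof (cases "n = j")
  case True
  then have "BS = {#u'#}" using assms by (auto simp: lsub_RVar_iff)
  moreover have "lsub (Suc m) (RVar j) {#} (RVar j)" using assms(1) ls_miss[of j "Suc m"] by auto
  moreover have "lsub j (RVar j) {#w#} w" by (rule ls_hit)
  moreover have "lsub_ms m {#u'#} TS {#w#}" using assms(3) by (simp add: lsub_ms_singleton_iff)
  ultimately show ?thesis using True
    by (intro exI[of _ "{#}"] exI[of _ TS] exI[of _ "RVar j"] exI[of _ "{#w#}"]) auto
next
  case False
  define n' where "n' = (if j < n then n - 1 else n)"
  have bs: "BS = {#}" "u' = RVar n'" using assms False by (auto simp: lsub_RVar_iff n'_def)
  show ?thesis
  proof (cases "n' = m")
    case True
    then have n: "n = Suc m" using False assms(1) by (auto simp: n'_def split: if_splits)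
    have "TS = {#w#}" using assms(3) bs True by (auto simp: lsub_RVar_iff)
    moreover have "lsub (Suc m) (RVar (Suc m)) {#rlift j w#} (rlift j w)" by (rule ls_hit)
    moreover have "lsub j (rlift j w) {#} w" by (simp add: lsub_rlift_self_iff)
    ultimately show ?thesis using n bs
      by (intro exI[of _ "{#w#}"] exI[of _ "{#}"] exI[of _ "rlift j w"] exI[of _ "{#}"])
         (auto intro: lsub_lsub_ms.intros)
  next
    case F2: False
    then have "TS = {#}" "w = RVar (if m < n' then n' - 1 else n')"
      using assms(3) bs by (auto simp: lsub_RVar_iff)
    moreover have "n \<noteq> Suc m" using F2 False assms(1) by (auto simp: n'_def)
    moreover have "lsub j (RVar (if Suc m < n then n - 1 else n)) {#} w"
      using calculation False F2 assms(1) by (auto simp: lsub_RVar_iff n'_def split: if_splits)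
    ultimately show ?thesis using bs
      by (intro exI[of _ "{#}"] exI[of _ "{#}"] exI[of _ "RVar (if Suc m < n then n - 1 else n)"] exI[of _ "{#}"])
         (auto simp: lsub_RVar_iff intro: lsub_lsub_ms.intros)
  qed
qed

lemma lsub_subst_split:
  "j \<le> m \<Longrightarrow> lsub j a BS u' \<Longrightarrow> lsub m u' TS w \<Longrightarrow>
   \<exists>TS1 TS2 a' BS'. TS = TS1 + TS2 \<and> lsub (Suc m) a (image_mset (rlift j) TS1) a' \<and>
      lsub_ms m BS TS2 BS' \<and> lsub j a' BS' w"
proof (induction a arbitrary: j m BS u' TS w)
  case (RVar n)
  then show ?case by (rule lsub_subst_split_RVar)
next
  case (RLam b)
  from RLam.prems(2) obtain u1 where u1: "u' = RLam u1" "lsub (Suc j) b (image_mset (rlift 0) BS) u1"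
    by (auto simp: lsub_RLam_iff)
  from RLam.prems(3) u1 obtain w1 where w1: "w = RLam w1" "lsub (Suc m) u1 (image_mset (rlift 0) TS) w1"
    by (auto simp: lsub_RLam_iff)
  from RLam.IH[OF _ u1(2) w1(2)] RLam.prems(1) obtain T1 T2 b' BS'' where
    h: "image_mset (rlift 0) TS = T1 + T2" "lsub (Suc (Suc m)) b (image_mset (rlift (Suc j)) T1) b'"
       "lsub_ms (Suc m) (image_mset (rlift 0) BS) T2 BS''" "lsub (Suc j) b' BS'' w1" by auto
  then obtain TS1 TS2 where t: "TS = TS1 + TS2" "T1 = image_mset (rlift 0) TS1" "T2 = image_mset (rlift 0) TS2"
    using image_mset_eq_plusD by blast
  obtain BS' where bs': "lsub_ms m BS TS2 BS'" "BS'' = image_mset (rlift 0) BS'"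
    using lsub_ms_rlift_belowD[of 0 m BS TS2 BS''] h t by auto
  have "lsub (Suc m) (RLam b) (image_mset (rlift j) TS1) (RLam b')"
    using h t by (auto intro!: ls_lam simp: image_rlift0_rlift)
  moreover have "lsub j (RLam b') BS' w" using h bs' w1 by (auto intro!: ls_lam)
  ultimately show ?case using t bs' by blast
next
  case (RApp c ds)
  from RApp.prems(2) obtain M1 M2 u1 us where h: "BS = M1 + M2" "u' = RApp u1 us" "lsub j c M1 u1"
    "lsub_ms j ds M2 us"
    by (auto simp: lsub_RApp_iff)
  from RApp.prems(3) h obtain T1 T2 w1 ws where hw: "TS = T1 + T2" "w = RApp w1 ws" "lsub m u1 T1 w1"
    "lsub_ms m us T2 ws"
    by (auto simp: lsub_RApp_iff)
  from RApp.IH(1)[OF RApp.prems(1) h(3) hw(3)] obtain P1 Q1 c' B1 where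
    c: "T1 = P1 + Q1" "lsub (Suc m) c (image_mset (rlift j) P1) c'" "lsub_ms m M1 Q1 B1" "lsub j c' B1 w1"
      by blast
  obtain P2 Q2 ds' B2 where d: "T2 = P2 + Q2" "lsub_ms (Suc m) ds (image_mset (rlift j) P2) ds'"
      "lsub_ms m M2 Q2 B2" "lsub_ms j ds' B2 ws"
    using lsub_ms_subst_split_elementwise[OF _ h(4) hw(4)] RApp.IH(2) RApp.prems(1) by blast
  have "lsub (Suc m) (RApp c ds) (image_mset (rlift j) (P1 + P2)) (RApp c' ds')" using c d
    by (auto intro: lsub_lsub_ms.intros)
  moreover have "lsub_ms m BS (Q1 + Q2) (B1 + B2)" using c d h by (simp add: lsub_ms_union)
  moreover have "lsub j (RApp c' ds') (B1 + B2) w" using c d hw by (auto intro: lsub_lsub_ms.intros)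
  ultimately show ?case using hw c d
    by (intro exI[of _ "P1 + P2"] exI[of _ "Q1 + Q2"] exI[of _ "RApp c' ds'"] exI[of _ "B1 + B2"]) (auto simp: ac_simps)
qed

section \<open>Resource reduction\<close>

lemma lsubst_rlift: "lsubst (rlift (Suc j) s) (image_mset (rlift j) ts) = rlift j ` lsubst s ts"
  unfolding lsubst_def using lsub_rlift_above(1)[of 0 s ts _ j] lsub_rlift_aboveD[of 0 j s ts] by auto

lemma rred_rlift: "rred t T \<Longrightarrow> rred (rlift j t) (rlift j ` T)"
proof (induction arbitrary: j rule: rred.induct)
  case (rbase s ts)
  then show ?case using rred.rbase[of "rlift (Suc j) s" "image_mset (rlift j) ts"] by (simp add: lsubst_rlift)
next
  case (rlam s T)
  then show ?case using rred.rlam[OF rlam.IH[of "Suc j"]] by (simp add: image_image)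
next
  case (rappL s T ts)
  then show ?case using rred.rappL[OF rappL.IH[of j]] by (simp add: image_image)
next
  case (rappR t T s us)
  then show ?case using rred.rappR[OF rappR.IH[of j]] by (simp add: image_image)
qed

lemma rred_RVar [simp]: "\<not> rred (RVar n) S"
  by (auto elim: rred.cases)

lemma rred_RLam_iff: "rred (RLam s) S \<longleftrightarrow> (\<exists>T. rred s T \<and> S = RLam ` T)"
  by (auto elim: rred.cases intro: rred.intros)

lemma rred_RApp_iff:
  "rred (RApp s ts) S \<longleftrightarrow>
     (\<exists>u. s = RLam u \<and> S = lsubst u ts) \<or> (\<exists>T. rred s T \<and> S = (\<lambda>s'. RApp s' ts) ` T) \<or>
     (\<exists>t us T. ts = add_mset t us \<and> rred t T \<and> S = (\<lambda>t'. RApp s (add_mset t' us)) ` T)"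
proof
  assume "rred (RApp s ts) S"
  then show "(\<exists>u. s = RLam u \<and> S = lsubst u ts) \<or> (\<exists>T. rred s T \<and> S = (\<lambda>s'. RApp s' ts) ` T) \<or>
     (\<exists>t us T. ts = add_mset t us \<and> rred t T \<and> S = (\<lambda>t'. RApp s (add_mset t' us)) ` T)"
    by (cases rule: rred.cases) blast+
qed (auto intro: rred.intros)

primrec rsize :: "rtm \<Rightarrow> nat" where
  "rsize (RVar n) = 1"
| "rsize (RLam s) = Suc (rsize s)"
| "rsize (RApp s ts) = Suc (rsize s + sum_mset (image_mset rsize ts))"

lemma rsize_rlift [simp]: "rsize (rlift j t) = rsize t"
  by (induction t arbitrary: j)
    (auto simp: multiset.map_comp comp_def intro!: arg_cong[where f=sum_mset] multiset.map_cong0)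

text \<open>Each substituted term takes the place of a variable of size 1.\<close>
lemma rsize_lsub:
  shows "lsub k s ts v \<Longrightarrow> rsize v + size ts = rsize s + sum_mset (image_mset rsize ts)"
    and "lsub_ms k us ts vs \<Longrightarrow>
           sum_mset (image_mset rsize vs) + size ts = sum_mset (image_mset rsize us) + sum_mset (image_mset rsize ts)"
proof (induction rule: lsub_lsub_ms.inducts)
  case (ls_lam k s ts s')
  then show ?case by (simp add: multiset.map_comp comp_def)
qed auto

lemma rsize_rred: "rred s S \<Longrightarrow> x \<in> S \<Longrightarrow> rsize x < rsize s"
proof (induction arbitrary: x rule: rred.induct)
  case (rbase s ts)
  then show ?case using rsize_lsub(1)[of 0 s ts x] by (simp add: lsubst_def)
qed auto

lemma finite_submultisets: "finite {A. A \<subseteq># (M :: 'a multiset)}"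
proof -
  have "{A. A \<subseteq># M} \<subseteq> (\<Union>n\<in>{..size M}. multisets_of_size (set_mset M) n)"
    unfolding multisets_of_size_def using mset_subset_eqD size_mset_mono by fastforce
  then show ?thesis by (rule finite_subset) auto
qed

lemma finite_lsub_ms:
  assumes "\<And>x k ts. x \<in># us \<Longrightarrow> finite {v. lsub k x ts v}"
  shows "finite {vs. lsub_ms k us ts vs}"
  using assms
proof (induction us arbitrary: ts)
  case empty
  then show ?case by (simp add: lsub_ms_empty_iff)
next
  case (add u us)
  have "{vs. lsub_ms k (add_mset u us) ts vs} \<subseteq>
     (\<lambda>(x, y). add_mset x y) ` (\<Union>A\<in>{A. A \<subseteq># ts}. {x. lsub k u (ts - A) x} \<times> {y. lsub_ms k us A y})"
  proof
    fix vs assume "vs \<in> {vs. lsub_ms k (add_mset u us) ts vs}"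
    then obtain ts1 ts2 u' us' where h: "ts = ts1 + ts2" "lsub_ms k us ts1 us'" "lsub k u ts2 u'"
      "vs = add_mset u' us'"
      by (auto simp: lsub_ms_add_mset_iff)
    then have "ts1 \<subseteq># ts" "ts2 = ts - ts1" by auto
    then show "vs \<in> (\<lambda>(x, y). add_mset x y) ` (\<Union>A\<in>{A. A \<subseteq># ts}. {x. lsub k u (ts - A) x} \<times> {y. lsub_ms k us A y})"
      using h by force
  qed
  moreover have "finite (\<Union>A\<in>{A. A \<subseteq># ts}. {x. lsub k u (ts - A) x} \<times> {y. lsub_ms k us A y})"
    using add by (intro finite_UN_I finite_submultisets finite_cartesian_product) auto
  ultimately show ?case by (meson finite_imageI finite_subset)
qed

lemma finite_lsub: "finite {v. lsub k s ts v}"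
proof (induction s arbitrary: k ts)
  case (RVar n)
  have "{v. lsub k (RVar n) ts v} \<subseteq> set_mset ts \<union> {RVar (if k < n then n - 1 else n)}"
    by (auto simp: lsub_RVar_iff)
  then show ?case by (rule finite_subset) auto
next
  case (RLam s)
  have "{v. lsub k (RLam s) ts v} \<subseteq> RLam ` {v. lsub (Suc k) s (image_mset (rlift 0) ts) v}"
    by (auto simp: lsub_RLam_iff)
  then show ?case using RLam by (meson finite_imageI finite_subset)
next
  case (RApp s us)
  have "{v. lsub k (RApp s us) ts v} \<subseteq>
     (\<lambda>(x, y). RApp x y) ` (\<Union>A\<in>{A. A \<subseteq># ts}. {x. lsub k s A x} \<times> {y. lsub_ms k us (ts - A) y})"
  proof
    fix v assume "v \<in> {v. lsub k (RApp s us) ts v}"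
    then obtain ts1 ts2 s' us' where h: "ts = ts1 + ts2" "v = RApp s' us'" "lsub k s ts1 s'"
      "lsub_ms k us ts2 us'"
      by (auto simp: lsub_RApp_iff)
    then have "ts1 \<subseteq># ts" "ts2 = ts - ts1" by auto
    then show "v \<in> (\<lambda>(x, y). RApp x y) ` (\<Union>A\<in>{A. A \<subseteq># ts}. {x. lsub k s A x} \<times> {y. lsub_ms k us (ts - A) y})"
      using h by force
  qed
  moreover have "finite (\<Union>A\<in>{A. A \<subseteq># ts}. {x. lsub k s A x} \<times> {y. lsub_ms k us (ts - A) y})"
    using RApp finite_lsub_ms by (intro finite_UN_I finite_submultisets finite_cartesian_product) auto
  ultimately show ?case by (meson finite_imageI finite_subset)
qed

lemma rred_finite: "rred s S \<Longrightarrow> finite S"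
  by (induction rule: rred.induct) (auto simp: lsubst_def finite_lsub)

text \<open>A step in the body \<open>u\<close> or in the bag of a redex \<open>\<langle>\<lambda>u\<rangle>ts\<close> can be simulated, summand by
  summand, after firing the redex, and conversely; these are the critical pairs of confluence.\<close>

lemma lsub_body_rred:
  "rred u U \<Longrightarrow> lsub k u ts v
    \<Longrightarrow> \<exists>V. rred v V \<and> (\<forall>v'\<in>V. \<exists>u'\<in>U. lsub k u' ts v')"
proof (induction arbitrary: k ts v rule: rred.induct)
  case (rbase s bs)
  then obtain ts1 ts2 a' bs' where h: "ts = ts1 + ts2" "v = RApp (RLam a') bs'"
    "lsub (Suc k) s (image_mset (rlift 0) ts1) a'" "lsub_ms k bs ts2 bs'"
    by (auto simp: lsub_RApp_iff lsub_RLam_iff)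
  have "\<forall>w\<in>lsubst a' bs'. \<exists>u'\<in>lsubst s bs. lsub k u' ts w"
    using lsub_subst_merge[of 0 k s ts1 a' bs ts2 bs'] h unfolding lsubst_def by auto
  then show ?case using h rred.rbase by blast
next
  case (rlam s T)
  then obtain v1 where v: "v = RLam v1" "lsub (Suc k) s (image_mset (rlift 0) ts) v1"
    by (auto simp: lsub_RLam_iff)
  then obtain V where "rred v1 V"
    "\<forall>v'\<in>V. \<exists>u'\<in>T. lsub (Suc k) u' (image_mset (rlift 0) ts) v'" using rlam.IH by blast
  then show ?case using v by (intro exI[of _ "RLam ` V"]) (auto intro: rred.rlam ls_lam)
next
  case (rappL s T us)
  then obtain ts1 ts2 v1 us' where v: "ts = ts1 + ts2" "v = RApp v1 us'" "lsub k s ts1 v1"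
    "lsub_ms k us ts2 us'"
    by (auto simp: lsub_RApp_iff)
  then obtain V where "rred v1 V" "\<forall>v'\<in>V. \<exists>u'\<in>T. lsub k u' ts1 v'" using rappL.IH
    by blast
  then show ?case using v by (intro exI[of _ "(\<lambda>x. RApp x us') ` V"]) (auto intro: rred.rappL ls_app)
next
  case (rappR t T s us)
  then obtain ts1 ts2 v1 cs where v: "ts = ts1 + ts2" "v = RApp v1 cs" "lsub k s ts1 v1"
    "lsub_ms k (add_mset t us) ts2 cs"
    by (auto simp: lsub_RApp_iff)
  then obtain A B cs0 c where c: "ts2 = A + B" "lsub_ms k us A cs0" "lsub k t B c" "cs = add_mset c cs0"
    by (auto simp: lsub_ms_add_mset_iff)
  then obtain C where C: "rred c C" "\<forall>c'\<in>C. \<exists>t'\<in>T. lsub k t' B c'" using rappR.IH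
    by blast
  have "lsub k (RApp s (add_mset t' us)) ts (RApp v1 (add_mset c' cs0))" if "lsub k t' B c'" for t' c'
    using that v c by (auto intro: lsub_lsub_ms.intros)
  then have "\<forall>v'\<in>(\<lambda>c'. RApp v1 (add_mset c' cs0)) ` C. \<exists>u'\<in>(\<lambda>t'. RApp s (add_mset t' us)) ` T. lsub k u' ts v'"
    using C by blast
  then show ?case using v c C rred.rappR by blast
qed

lemma lsub_body_rredD:
  "rred u U \<Longrightarrow> u' \<in> U \<Longrightarrow> lsub k u' ts v'
    \<Longrightarrow> \<exists>v V. lsub k u ts v \<and> rred v V \<and> v' \<in> V"
proof (induction arbitrary: k ts u' v' rule: rred.induct)
  case (rbase s bs)
  then have "lsub 0 s bs u'" by (simp add: lsubst_def)
  from lsub_subst_split[OF _ this rbase.prems(2)] obtain TS1 TS2 a' BS' where h: "ts = TS1 + TS2"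
    "lsub (Suc k) s (image_mset (rlift 0) TS1) a'" "lsub_ms k bs TS2 BS'" "lsub 0 a' BS' v'" by auto
  have "lsub k (RApp (RLam s) bs) ts (RApp (RLam a') BS')" using h by (auto intro: lsub_lsub_ms.intros)
  moreover have "v' \<in> lsubst a' BS'" using h by (simp add: lsubst_def)
  ultimately show ?case using rred.rbase by blast
next
  case (rlam s T)
  then obtain x y where xy: "u' = RLam x" "x \<in> T" "v' = RLam y" "lsub (Suc k) x (image_mset (rlift 0) ts) y"
    by (auto simp: lsub_RLam_iff)
  then obtain v V where "lsub (Suc k) s (image_mset (rlift 0) ts) v" "rred v V" "y \<in> V" using rlam.IH
    by blast
  then show ?case using xy by (intro exI[of _ "RLam v"] exI[of _ "RLam ` V"]) (auto intro: rred.rlam ls_lam)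
next
  case (rappL s T us)
  then obtain x where x: "u' = RApp x us" "x \<in> T" by auto
  with rappL.prems obtain ts1 ts2 y ys where y: "ts = ts1 + ts2" "v' = RApp y ys" "lsub k x ts1 y"
    "lsub_ms k us ts2 ys"
    by (auto simp: lsub_RApp_iff)
  then obtain v V where "lsub k s ts1 v" "rred v V" "y \<in> V" using rappL.IH x by blast
  then show ?case using y
    by (intro exI[of _ "RApp v ys"] exI[of _ "(\<lambda>z. RApp z ys) ` V"]) (auto intro: rred.rappL ls_app)
next
  case (rappR t T s us)
  then obtain t' where t': "u' = RApp s (add_mset t' us)" "t' \<in> T" by auto
  with rappR.prems obtain ts1 ts2 y ys where y: "ts = ts1 + ts2" "v' = RApp y ys" "lsub k s ts1 y"
    "lsub_ms k (add_mset t' us) ts2 ys" by (auto simp: lsub_RApp_iff)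
  then obtain A B ys0 c' where c: "ts2 = A + B" "lsub_ms k us A ys0" "lsub k t' B c'" "ys = add_mset c' ys0"
    by (auto simp: lsub_ms_add_mset_iff)
  then obtain c C where C: "lsub k t B c" "rred c C" "c' \<in> C" using rappR.IH t' by blast
  have "lsub k (RApp s (add_mset t us)) ts (RApp y (add_mset c ys0))" using y c C
    by (auto intro: lsub_lsub_ms.intros)
  moreover have "rred (RApp y (add_mset c ys0)) ((\<lambda>z. RApp y (add_mset z ys0)) ` C)"
    using C rred.rappR by blast
  ultimately show ?case using y c C by blast
qed

lemma image_mset_diff_singleton:
  "t \<in># ts \<Longrightarrow> image_mset f ts - {#f t#} = image_mset f (ts - {#t#})"
  by (simp add: image_mset_Diff)

lemma add_mset_union_diff_left:
  "t \<in># A \<Longrightarrow> add_mset x (A + B - {#t#}) = add_mset x (A - {#t#}) + B"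
  by (simp add: diff_union_single_conv)

lemma add_mset_union_diff_right:
  "t \<in># B \<Longrightarrow> add_mset x (A + B - {#t#}) = A + add_mset x (B - {#t#})"
  by (metis add.commute add_mset_union_diff_left union_mset_add_mset_right)

lemma lsub_bag_rred:
  shows "lsub k u ms v \<Longrightarrow> t \<in># ms \<Longrightarrow> rred t T \<Longrightarrow>
           \<exists>V. rred v V \<and> (\<forall>v'\<in>V. \<exists>t'\<in>T. lsub k u (add_mset t' (ms - {#t#})) v')"
    and "lsub_ms k us ms vs \<Longrightarrow> t \<in># ms \<Longrightarrow> rred t T \<Longrightarrow>
           \<exists>c cs C. vs = add_mset c cs \<and> rred c C \<and>
              (\<forall>c'\<in>C. \<exists>t'\<in>T. lsub_ms k us (add_mset t' (ms - {#t#})) (add_mset c' cs))"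
proof (induction arbitrary: t T and t T rule: lsub_lsub_ms.inducts)
  case (ls_hit k x)
  then show ?case using lsub_lsub_ms.ls_hit by auto
next
  case (ls_lam k s ts s')
  have "rlift 0 t \<in># image_mset (rlift 0) ts" using ls_lam.prems by auto
  from ls_lam.IH[OF this rred_rlift[OF ls_lam.prems(2)]] obtain V where V1: "rred s' V"
    and V0: "\<forall>v'\<in>V. \<exists>t'\<in>rlift 0 ` T. lsub (Suc k) s (add_mset t' (image_mset (rlift 0) ts - {#rlift 0 t#})) v'"
    by blast
  have V2: "\<forall>v'\<in>V. \<exists>t'\<in>T. lsub (Suc k) s (add_mset (rlift 0 t') (image_mset (rlift 0) (ts - {#t#}))) v'"
    using V0 ls_lam.prems(1) by (auto simp: image_mset_diff_singleton)
  have "lsub k (RLam s) (add_mset t' (ts - {#t#})) (RLam v')"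
    if "lsub (Suc k) s (add_mset (rlift 0 t') (image_mset (rlift 0) (ts - {#t#}))) v'" for t' v'
    using that lsub_lsub_ms.ls_lam[of k s "add_mset t' (ts - {#t#})"] by simp
  then have "\<forall>v'\<in>RLam ` V. \<exists>t'\<in>T. lsub k (RLam s) (add_mset t' (ts - {#t#})) v'"
    using V2 by fast
  then show ?case using rred.rlam[OF V1] by blast
next
  case (ls_app k s ts1 s' us ts2 us')
  show ?case
  proof (cases "t \<in># ts1")
    case True
    from ls_app.IH(1)[OF True ls_app.prems(2)] obtain V where V: "rred s' V"
      "\<forall>v'\<in>V. \<exists>t'\<in>T. lsub k s (add_mset t' (ts1 - {#t#})) v'" by blast
    have "lsub k (RApp s us) (add_mset t' (ts1 + ts2 - {#t#})) (RApp x us')"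
      if "lsub k s (add_mset t' (ts1 - {#t#})) x" for t' x
      using lsub_lsub_ms.ls_app[OF that ls_app.hyps(2)] by (simp only: add_mset_union_diff_left[OF True])
    then have "\<forall>v'\<in>(\<lambda>x. RApp x us') ` V. \<exists>t'\<in>T. lsub k (RApp s us) (add_mset t' (ts1 + ts2 - {#t#})) v'"
      using V(2) by fast
    then show ?thesis using rred.rappL[OF V(1)] by blast
  next
    case False
    then have t2: "t \<in># ts2" using ls_app.prems by auto
    from ls_app.IH(2)[OF t2 ls_app.prems(2)] obtain c cs C where C: "us' = add_mset c cs" "rred c C"
      "\<forall>c'\<in>C. \<exists>t'\<in>T. lsub_ms k us (add_mset t' (ts2 - {#t#})) (add_mset c' cs)" by blast
    have "lsub k (RApp s us) (add_mset t' (ts1 + ts2 - {#t#})) (RApp s' (add_mset c' cs))"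
      if "lsub_ms k us (add_mset t' (ts2 - {#t#})) (add_mset c' cs)" for t' c'
      using lsub_lsub_ms.ls_app[OF ls_app.hyps(1) that] by (simp only: add_mset_union_diff_right[OF t2])
    then have "\<forall>v'\<in>(\<lambda>x. RApp s' (add_mset x cs)) ` C.
        \<exists>t'\<in>T. lsub k (RApp s us) (add_mset t' (ts1 + ts2 - {#t#})) v'"
      using C(3) by fast
    then show ?thesis using rred.rappR[OF C(2), of s' cs] unfolding C(1) by blast
  qed
next
  case (lsm_add k us ts1 us' u ts2 u')
  show ?case
  proof (cases "t \<in># ts1")
    case True
    from lsm_add.IH(1)[OF True lsm_add.prems(2)] obtain c cs C where C: "us' = add_mset c cs" "rred c C"
      "\<forall>c'\<in>C. \<exists>t'\<in>T. lsub_ms k us (add_mset t' (ts1 - {#t#})) (add_mset c' cs)" by blast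
    have "lsub_ms k (add_mset u us) (add_mset t' (ts1 + ts2 - {#t#})) (add_mset c' (add_mset u' cs))"
      if "lsub_ms k us (add_mset t' (ts1 - {#t#})) (add_mset c' cs)" for t' c'
      using lsub_lsub_ms.lsm_add[OF that lsm_add.hyps(2)]
      by (simp only: add_mset_union_diff_left[OF True] add_mset_commute[of u'])
    then have "\<forall>c'\<in>C. \<exists>t'\<in>T. lsub_ms k (add_mset u us) (add_mset t' (ts1 + ts2 - {#t#})) (add_mset c' (add_mset u' cs))"
      using C(3) by fast
    moreover have "add_mset u' us' = add_mset c (add_mset u' cs)" using C(1) by (simp add: add_mset_commute)
    ultimately show ?thesis using C(2) by blast
  next
    case False
    then have t2: "t \<in># ts2" using lsm_add.prems by auto
    from lsm_add.IH(2)[OF t2 lsm_add.prems(2)] obtain V where V: "rred u' V"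
      "\<forall>v'\<in>V. \<exists>t'\<in>T. lsub k u (add_mset t' (ts2 - {#t#})) v'" by blast
    have "lsub_ms k (add_mset u us) (add_mset t' (ts1 + ts2 - {#t#})) (add_mset c' us')"
      if "lsub k u (add_mset t' (ts2 - {#t#})) c'" for t' c'
      using lsub_lsub_ms.lsm_add[OF lsm_add.hyps(1) that] by (simp only: add_mset_union_diff_right[OF t2])
    then have "\<forall>c'\<in>V. \<exists>t'\<in>T. lsub_ms k (add_mset u us) (add_mset t' (ts1 + ts2 - {#t#})) (add_mset c' us')"
      using V(2) by fast
    then show ?thesis using V(1) by blast
  qed
qed auto

lemma lsub_bag_rredD:
  shows "lsub k u ms v' \<Longrightarrow> t' \<in># ms \<Longrightarrow> t' \<in> T \<Longrightarrow> rred t T \<Longrightarrow>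
           \<exists>v V. lsub k u (add_mset t (ms - {#t'#})) v \<and> rred v V \<and> v' \<in> V"
    and "lsub_ms k us ms vs' \<Longrightarrow> t' \<in># ms \<Longrightarrow> t' \<in> T \<Longrightarrow> rred t T \<Longrightarrow>
           \<exists>c' cs c C. vs' = add_mset c' cs \<and> lsub_ms k us (add_mset t (ms - {#t'#})) (add_mset c cs) \<and>
              rred c C \<and> c' \<in> C"
proof (induction arbitrary: t T t' and t T t' rule: lsub_lsub_ms.inducts)
  case (ls_hit k x)
  then show ?case using lsub_lsub_ms.ls_hit[of k t] by auto
next
  case (ls_lam k s ts s')
  have "rlift 0 t' \<in># image_mset (rlift 0) ts" "rlift 0 t' \<in> rlift 0 ` T" using ls_lam.prems by auto
  from ls_lam.IH[OF this rred_rlift[OF ls_lam.prems(3)]] obtain v V where V: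
    "lsub (Suc k) s (add_mset (rlift 0 t) (image_mset (rlift 0) (ts - {#t'#}))) v" "rred v V" "s' \<in> V"
    using ls_lam.prems(1) by (auto simp: image_mset_diff_singleton)
  have "lsub k (RLam s) (add_mset t (ts - {#t'#})) (RLam v)"
    using V(1) lsub_lsub_ms.ls_lam[of k s "add_mset t (ts - {#t'#})"] by simp
  then show ?case using rred.rlam[OF V(2)] V(3) by blast
next
  case (ls_app k s ts1 s' us ts2 us')
  show ?case
  proof (cases "t' \<in># ts1")
    case True
    from ls_app.IH(1)[OF True ls_app.prems(2,3)] obtain v V where V:
      "lsub k s (add_mset t (ts1 - {#t'#})) v" "rred v V" "s' \<in> V" by blast
    have "lsub k (RApp s us) (add_mset t (ts1 + ts2 - {#t'#})) (RApp v us')"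
      using lsub_lsub_ms.ls_app[OF V(1) ls_app.hyps(2)] by (simp only: add_mset_union_diff_left[OF True])
    then show ?thesis using rred.rappL[OF V(2), of us'] V(3) by blast
  next
    case False
    then have t2: "t' \<in># ts2" using ls_app.prems by auto
    from ls_app.IH(2)[OF t2 ls_app.prems(2,3)] obtain c' cs c C where C: "us' = add_mset c' cs"
      "lsub_ms k us (add_mset t (ts2 - {#t'#})) (add_mset c cs)" "rred c C" "c' \<in> C" by blast
    have "lsub k (RApp s us) (add_mset t (ts1 + ts2 - {#t'#})) (RApp s' (add_mset c cs))"
      using lsub_lsub_ms.ls_app[OF ls_app.hyps(1) C(2)] by (simp only: add_mset_union_diff_right[OF t2])
    then show ?thesis using rred.rappR[OF C(3), of s' cs] C(1,4) by blast
  qed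
next
  case (lsm_add k us ts1 us' u ts2 u')
  show ?case
  proof (cases "t' \<in># ts1")
    case True
    from lsm_add.IH(1)[OF True lsm_add.prems(2,3)] obtain c' cs c C where C: "us' = add_mset c' cs"
      "lsub_ms k us (add_mset t (ts1 - {#t'#})) (add_mset c cs)" "rred c C" "c' \<in> C" by blast
    have "lsub_ms k (add_mset u us) (add_mset t (ts1 + ts2 - {#t'#})) (add_mset c (add_mset u' cs))"
      using lsub_lsub_ms.lsm_add[OF C(2) lsm_add.hyps(2)]
      by (simp only: add_mset_union_diff_left[OF True] add_mset_commute[of u'])
    moreover have "add_mset u' us' = add_mset c' (add_mset u' cs)" using C by (simp add: add_mset_commute)
    ultimately show ?thesis using C by blast
  next
    case False
    then have t2: "t' \<in># ts2" using lsm_add.prems by auto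
    from lsm_add.IH(2)[OF t2 lsm_add.prems(2,3)] obtain v V where V:
      "lsub k u (add_mset t (ts2 - {#t'#})) v" "rred v V" "u' \<in> V" by blast
    have "lsub_ms k (add_mset u us) (add_mset t (ts1 + ts2 - {#t'#})) (add_mset v us')"
      using lsub_lsub_ms.lsm_add[OF lsm_add.hyps(1) V(1)] by (simp only: add_mset_union_diff_right[OF t2])
    then show ?thesis using V by blast
  qed
qed auto


section \<open>Uniqueness of resource normal forms\<close>

definition rnf :: "rtm \<Rightarrow> bool" where
  "rnf s \<longleftrightarrow> (\<forall>S. \<not> rred s S)"

text \<open>\<open>tree_nf s X\<close>: \<open>X\<close> is the set of leaves of some reduction tree of \<open>s\<close> whose leaves are normal.
  Confluence amounts to \<open>X\<close> not depending on the tree, which is proved by induction on \<open>rsize s\<close>.\<close>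
inductive tree_nf :: "rtm \<Rightarrow> rtm set \<Rightarrow> bool" where
  nf_leaf: "rnf s \<Longrightarrow> tree_nf s {s}"
| nf_node: "rred s S \<Longrightarrow> \<forall>x\<in>S. tree_nf x (F x) \<Longrightarrow> tree_nf s (\<Union>x\<in>S. F x)"

lemma tree_nf_exists: "\<exists>X. tree_nf s X"
proof (induction s rule: measure_induct_rule[where f=rsize])
  case (less s)
  show ?case
  proof (cases "rnf s")
    case True
    then show ?thesis using nf_leaf by blast
  next
    case False
    then obtain S where S: "rred s S" by (auto simp: rnf_def)
    then have "\<forall>x\<in>S. \<exists>X. tree_nf x X" using less rsize_rred by blast
    then obtain F where "\<forall>x\<in>S. tree_nf x (F x)" by (metis bchoice)
    then show ?thesis using nf_node[OF S] by blast
  qed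
qed

definition some_nf :: "rtm \<Rightarrow> rtm set" where
  "some_nf s = (SOME X. tree_nf s X)"

lemma tree_nf_some_nf: "tree_nf s (some_nf s)"
  unfolding some_nf_def using tree_nf_exists by (rule someI_ex)

definition nf_sum :: "rtm set \<Rightarrow> rtm set" where
  "nf_sum S = (\<Union>x\<in>S. some_nf x)"

lemma tree_nf_rred_image:
  assumes "inj_on f S0" "rred s (f ` S0)" "\<forall>x\<in>S0. tree_nf (f x) (G x)"
  shows "tree_nf s (\<Union>x\<in>S0. G x)"
proof -
  let ?F = "\<lambda>y. G (inv_into S0 f y)"
  have "\<forall>y\<in>f ` S0. tree_nf y (?F y)" using assms by auto
  from nf_node[OF assms(2) this] have "tree_nf s (\<Union>y\<in>f ` S0. ?F y)" .
  moreover have "(\<Union>y\<in>f ` S0. ?F y) = (\<Union>x\<in>S0. G x)" using assms(1) by auto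
  ultimately show ?thesis by simp
qed

lemma rnf_RLam_iff: "rnf (RLam a) \<longleftrightarrow> rnf a"
  by (auto simp: rnf_def rred_RLam_iff)

lemma tree_nf_RLam: "tree_nf a X \<Longrightarrow> tree_nf (RLam a) (RLam ` X)"
proof (induction rule: tree_nf.induct)
  case (nf_leaf s)
  then show ?case using tree_nf.nf_leaf rnf_RLam_iff by fastforce
next
  case (nf_node s S F)
  have "tree_nf (RLam s) (\<Union>x\<in>S. RLam ` F x)"
    by (rule tree_nf_rred_image[of RLam S]) (use nf_node rred.rlam in \<open>auto simp: inj_on_def\<close>)
  then show ?case by (simp add: image_UN)
qed

lemma tree_nf_RApp_fun:
  "tree_nf a X \<Longrightarrow> tree_nf (RApp a ts) (\<Union>m\<in>X. some_nf (RApp m ts))"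
proof (induction rule: tree_nf.induct)
  case (nf_leaf s)
  then show ?case using tree_nf_some_nf by simp
next
  case (nf_node s S F)
  have "tree_nf (RApp s ts) (\<Union>x\<in>S. \<Union>m\<in>F x. some_nf (RApp m ts))"
    by (rule tree_nf_rred_image[of "\<lambda>z. RApp z ts" S]) (use nf_node rred.rappL in \<open>auto simp: inj_on_def\<close>)
  then show ?case by simp
qed

lemma tree_nf_RApp_arg:
  "tree_nf t X
    \<Longrightarrow> tree_nf (RApp u (add_mset t us)) (\<Union>m\<in>X. some_nf (RApp u (add_mset m us)))"
proof (induction rule: tree_nf.induct)
  case (nf_leaf s)
  then show ?case using tree_nf_some_nf by simp
next
  case (nf_node s S F)
  have "tree_nf (RApp u (add_mset s us)) (\<Union>x\<in>S. \<Union>m\<in>F x. some_nf (RApp u (add_mset m us)))"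
    by (rule tree_nf_rred_image[of "\<lambda>z. RApp u (add_mset z us)" S]) (use nf_node rred.rappR in \<open>auto simp: inj_on_def\<close>)
  then show ?case by simp
qed

lemma rsize_tree_nf: "tree_nf x X \<Longrightarrow> y \<in> X \<Longrightarrow> rsize y \<le> rsize x"
  by (induction arbitrary: y rule: tree_nf.induct) (auto dest: rsize_rred, fastforce dest: rsize_rred)

lemma rsize_some_nf_rred: "rred x S \<Longrightarrow> y \<in> some_nf x \<Longrightarrow> rsize y < rsize x"
proof -
  assume r: "rred x S" and y: "y \<in> some_nf x"
  from tree_nf_some_nf[of x] show ?thesis
  proof (cases rule: tree_nf.cases)
    case nf_leaf
    then show ?thesis using r by (auto simp: rnf_def)
  next
    case (nf_node S' F)
    then obtain z where "z \<in> S'" "y \<in> F z" using y by auto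
    then show ?thesis using nf_node rsize_tree_nf rsize_rred by (meson order.strict_trans1)
  qed
qed

definition tree_nf_unique_below :: "nat \<Rightarrow> bool" where
  "tree_nf_unique_below n
    \<longleftrightarrow> (\<forall>x X. rsize x < n \<longrightarrow> tree_nf x X \<longrightarrow> X = some_nf x)"

lemma some_nf_rred_below:
  "tree_nf_unique_below n \<Longrightarrow> rsize x < n
    \<Longrightarrow> rred x S \<Longrightarrow> some_nf x = nf_sum S"
  unfolding tree_nf_unique_below_def nf_sum_def using nf_node[of x S some_nf] tree_nf_some_nf by auto

lemma some_nf_RApp_fun_below:
  "tree_nf_unique_below n \<Longrightarrow> rsize (RApp a ts) < n
    \<Longrightarrow> some_nf (RApp a ts) = (\<Union>m\<in>some_nf a. some_nf (RApp m ts))"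
  unfolding tree_nf_unique_below_def using tree_nf_RApp_fun[OF tree_nf_some_nf[of a], of ts] by auto

lemma some_nf_RApp_arg_below:
  "tree_nf_unique_below n \<Longrightarrow> rsize (RApp u (add_mset t us)) < n \<Longrightarrow>
    some_nf (RApp u (add_mset t us)) = (\<Union>m\<in>some_nf t. some_nf (RApp u (add_mset m us)))"
  unfolding tree_nf_unique_below_def using tree_nf_RApp_arg[OF tree_nf_some_nf[of t], of u us] by auto

lemma some_nf_RLam_below:
  "tree_nf_unique_below n \<Longrightarrow> rsize (RLam a) < n
    \<Longrightarrow> some_nf (RLam a) = RLam ` some_nf a"
  unfolding tree_nf_unique_below_def using tree_nf_RLam[OF tree_nf_some_nf[of a]] by auto

lemma nf_sum_rappR_below:
  "tree_nf_unique_below n \<Longrightarrow> rred t T \<Longrightarrow> rsize (RApp u (add_mset t us)) \<le> n \<Longrightarrow>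
    nf_sum ((\<lambda>t'. RApp u (add_mset t' us)) ` T) = (\<Union>m\<in>some_nf t. some_nf (RApp u (add_mset m us)))"
proof -
  assume ub: "tree_nf_unique_below n" and r: "rred t T" and s: "rsize (RApp u (add_mset t us)) \<le> n"
  have "nf_sum ((\<lambda>t'. RApp u (add_mset t' us)) ` T) = (\<Union>x\<in>T. some_nf (RApp u (add_mset x us)))"
    by (simp add: nf_sum_def)
  also have "\<dots> = (\<Union>x\<in>T. \<Union>m\<in>some_nf x. some_nf (RApp u (add_mset m us)))"
  proof (rule SUP_cong[OF refl])
    fix x assume "x \<in> T"
    then have "rsize x < rsize t" using rsize_rred r by blast
    then show "some_nf (RApp u (add_mset x us)) = (\<Union>m\<in>some_nf x. some_nf (RApp u (add_mset m us)))"
      using some_nf_RApp_arg_below[OF ub] s by simp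
  qed
  also have "\<dots> = (\<Union>m\<in>nf_sum T. some_nf (RApp u (add_mset m us)))" by (simp add: nf_sum_def)
  also have "nf_sum T = some_nf t" using some_nf_rred_below[OF ub _ r] s by simp
  finally show ?thesis .
qed

lemma nf_sum_rappL_below:
  "tree_nf_unique_below n \<Longrightarrow> rred u T \<Longrightarrow> rsize (RApp u ts) \<le> n \<Longrightarrow>
    nf_sum ((\<lambda>z. RApp z ts) ` T) = (\<Union>m\<in>some_nf u. some_nf (RApp m ts))"
proof -
  assume ub: "tree_nf_unique_below n" and r: "rred u T" and s: "rsize (RApp u ts) \<le> n"
  have "nf_sum ((\<lambda>z. RApp z ts) ` T) = (\<Union>x\<in>T. some_nf (RApp x ts))"
    by (simp add: nf_sum_def)
  also have "\<dots> = (\<Union>x\<in>T. \<Union>m\<in>some_nf x. some_nf (RApp m ts))"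
  proof (rule SUP_cong[OF refl])
    fix x assume "x \<in> T"
    then have "rsize x < rsize u" using rsize_rred r by blast
    then show "some_nf (RApp x ts) = (\<Union>m\<in>some_nf x. some_nf (RApp m ts))"
      using some_nf_RApp_fun_below[OF ub] s by simp
  qed
  also have "\<dots> = (\<Union>m\<in>nf_sum T. some_nf (RApp m ts))" by (simp add: nf_sum_def)
  also have "nf_sum T = some_nf u" using some_nf_rred_below[OF ub _ r] s by simp
  finally show ?thesis .
qed

lemma lsubst_iff: "v \<in> lsubst u ts \<longleftrightarrow> lsub 0 u ts v"
  by (simp add: lsubst_def)

lemma nf_sum_lsubst_eq_below:
  assumes ub: "tree_nf_unique_below (rsize (RApp (RLam u) ts))"
    and fwd: "\<And>v. lsub 0 u ts v \<Longrightarrow> \<exists>V. rred v V \<and> (\<forall>v'\<in>V. \<exists>i\<in>I. lsub 0 (b i) (c i) v')"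
    and bwd: "\<And>i v'. i \<in> I \<Longrightarrow> lsub 0 (b i) (c i) v' \<Longrightarrow> \<exists>v W. lsub 0 u ts v \<and> rred v W \<and> v' \<in> W"
  shows "nf_sum (lsubst u ts) = (\<Union>i\<in>I. nf_sum (lsubst (b i) (c i)))"
proof -
  have some_nf_eq: "some_nf v = nf_sum V" if "lsub 0 u ts v" "rred v V" for v V
    using some_nf_rred_below[OF ub _ that(2)] rsize_rred[OF rred.rbase, of v] that(1) by (simp add: lsubst_iff)
  show ?thesis
  proof
    show "nf_sum (lsubst u ts) \<subseteq> (\<Union>i\<in>I. nf_sum (lsubst (b i) (c i)))"
    proof
      fix y assume "y \<in> nf_sum (lsubst u ts)"
      then obtain v where v: "lsub 0 u ts v" "y \<in> some_nf v" by (auto simp: nf_sum_def lsubst_iff)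
      obtain V where V: "rred v V" "\<forall>v'\<in>V. \<exists>i\<in>I. lsub 0 (b i) (c i) v'" using fwd[OF v(1)] by blast
      obtain v' where "v' \<in> V" "y \<in> some_nf v'" using v(2) some_nf_eq[OF v(1) V(1)] by (auto simp: nf_sum_def)
      then show "y \<in> (\<Union>i\<in>I. nf_sum (lsubst (b i) (c i)))" using V(2) by (fastforce simp: nf_sum_def lsubst_iff)
    qed
  next
    show "(\<Union>i\<in>I. nf_sum (lsubst (b i) (c i))) \<subseteq> nf_sum (lsubst u ts)"
    proof
      fix y assume "y \<in> (\<Union>i\<in>I. nf_sum (lsubst (b i) (c i)))"
      then obtain i v' where h: "i \<in> I" "lsub 0 (b i) (c i) v'" "y \<in> some_nf v'"
        by (auto simp: nf_sum_def lsubst_iff)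
      obtain v W where W: "lsub 0 u ts v" "rred v W" "v' \<in> W" using bwd[OF h(1,2)] by blast
      have "y \<in> some_nf v" using h W some_nf_eq[OF W(1,2)] by (auto simp: nf_sum_def)
      then show "y \<in> nf_sum (lsubst u ts)" using W(1) by (auto simp: nf_sum_def lsubst_iff)
    qed
  qed
qed

lemma nf_sum_redex_body_below:
  assumes ub: "tree_nf_unique_below (rsize (RApp (RLam u) ts))" and r: "rred u U"
  shows "nf_sum (lsubst u ts) = nf_sum ((\<lambda>z. RApp z ts) ` RLam ` U)"
proof -
  have "nf_sum ((\<lambda>z. RApp z ts) ` RLam ` U) = (\<Union>u'\<in>U. some_nf (RApp (RLam u') ts))"
    by (simp add: nf_sum_def)
  also have "\<dots> = (\<Union>u'\<in>U. nf_sum (lsubst u' ts))"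
    using some_nf_rred_below[OF ub _ rred.rbase] rsize_rred[OF r] by simp
  also have "\<dots> = nf_sum (lsubst u ts)"
    using nf_sum_lsubst_eq_below[OF ub, of U id "\<lambda>_. ts"] lsub_body_rred[OF r] lsub_body_rredD[OF r] by simp
  finally show ?thesis ..
qed

lemma nf_sum_redex_bag_below:
  assumes ub: "tree_nf_unique_below (rsize (RApp (RLam u) (add_mset t us)))" and r: "rred t T"
  shows "nf_sum (lsubst u (add_mset t us)) = nf_sum ((\<lambda>t'. RApp (RLam u) (add_mset t' us)) ` T)"
proof -
  have "nf_sum ((\<lambda>t'. RApp (RLam u) (add_mset t' us)) ` T) = (\<Union>t'\<in>T. some_nf (RApp (RLam u) (add_mset t' us)))"
    by (simp add: nf_sum_def)
  also have "\<dots> = (\<Union>t'\<in>T. nf_sum (lsubst u (add_mset t' us)))"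
    using some_nf_rred_below[OF ub _ rred.rbase] rsize_rred[OF r] by simp
  also have "\<dots> = nf_sum (lsubst u (add_mset t us))"
  proof (rule nf_sum_lsubst_eq_below[OF ub, of T "\<lambda>_. u" "\<lambda>t'. add_mset t' us", symmetric])
    show "\<exists>V. rred v V \<and> (\<forall>v'\<in>V. \<exists>t'\<in>T. lsub 0 u (add_mset t' us) v')" if "lsub 0 u (add_mset t us) v" for v
      using lsub_bag_rred(1)[OF that _ r] by simp
    show "\<exists>v W. lsub 0 u (add_mset t us) v \<and> rred v W \<and> v' \<in> W" if "t' \<in> T" "lsub 0 u (add_mset t' us) v'"
      for t' v'
      using lsub_bag_rredD(1)[OF that(2) _ that(1) r] by simp
  qed
  finally show ?thesis ..
qed

text \<open>Two steps in disjoint positions: both sides equal the normal forms obtained by normalising the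
  two positions one after the other.\<close>
lemma nf_sum_rappL_rappR_below:
  assumes ub: "tree_nf_unique_below (rsize (RApp u (add_mset t us)))" and r1: "rred u T" and r2: "rred t T'"
  shows "nf_sum ((\<lambda>z. RApp z (add_mset t us)) ` T) = nf_sum ((\<lambda>t'. RApp u (add_mset t' us)) ` T')"
proof -
  have "nf_sum ((\<lambda>z. RApp z (add_mset t us)) ` T) = (\<Union>a\<in>some_nf u. some_nf (RApp a (add_mset t us)))"
    using nf_sum_rappL_below[OF ub r1] by simp
  also have "\<dots> = (\<Union>a\<in>some_nf u. \<Union>m\<in>some_nf t. some_nf (RApp a (add_mset m us)))"
    using some_nf_RApp_arg_below[OF ub] rsize_some_nf_rred[OF r1] by simp
  also have "\<dots> = (\<Union>m\<in>some_nf t. \<Union>a\<in>some_nf u. some_nf (RApp a (add_mset m us)))"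
    by (rule SUP_commute)
  also have "\<dots> = (\<Union>m\<in>some_nf t. some_nf (RApp u (add_mset m us)))"
    using some_nf_RApp_fun_below[OF ub] rsize_some_nf_rred[OF r2] by simp
  also have "\<dots> = nf_sum ((\<lambda>t'. RApp u (add_mset t' us)) ` T')"
    using nf_sum_rappR_below[OF ub r2] by simp
  finally show ?thesis .
qed

lemma nf_sum_rappR_rappR_below:
  assumes ub: "tree_nf_unique_below (rsize (RApp u (add_mset t us)))" and eq: "add_mset t us = add_mset t2 us2"
    and r1: "rred t T" and r2: "rred t2 T2"
  shows "nf_sum ((\<lambda>t'. RApp u (add_mset t' us)) ` T) = nf_sum ((\<lambda>t'. RApp u (add_mset t' us2)) ` T2)"
proof (cases "t = t2")
  case True
  then show ?thesis
    using eq nf_sum_rappR_below[OF ub r1] nf_sum_rappR_below[OF _ r2, of "rsize (RApp u (add_mset t us))" u us2] ub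
    by simp
next
  case False
  then obtain w where w: "us = add_mset t2 w" "us2 = add_mset t w" using eq by (auto simp: add_eq_conv_ex)
  have "nf_sum ((\<lambda>t'. RApp u (add_mset t' us)) ` T) = (\<Union>m\<in>some_nf t. some_nf (RApp u (add_mset m us)))"
    using nf_sum_rappR_below[OF ub r1] by simp
  also have "\<dots> = (\<Union>m\<in>some_nf t. \<Union>m2\<in>some_nf t2. some_nf (RApp u (add_mset m2 (add_mset m w))))"
  proof (rule SUP_cong[OF refl])
    fix m assume "m \<in> some_nf t"
    then have "rsize m < rsize t" using rsize_some_nf_rred r1 by blast
    then show "some_nf (RApp u (add_mset m us)) = (\<Union>m2\<in>some_nf t2. some_nf (RApp u (add_mset m2 (add_mset m w))))"
      using some_nf_RApp_arg_below[OF ub, of u t2 "add_mset m w"] w by (simp add: add_mset_commute)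
  qed
  also have "\<dots> = (\<Union>m2\<in>some_nf t2. \<Union>m\<in>some_nf t. some_nf (RApp u (add_mset m2 (add_mset m w))))"
    by (rule SUP_commute)
  also have "\<dots> = (\<Union>m2\<in>some_nf t2. some_nf (RApp u (add_mset m2 us2)))"
  proof (rule SUP_cong[OF refl])
    fix m2 assume "m2 \<in> some_nf t2"
    then have "rsize m2 < rsize t2" using rsize_some_nf_rred r2 by blast
    then show "(\<Union>m\<in>some_nf t. some_nf (RApp u (add_mset m2 (add_mset m w)))) = some_nf (RApp u (add_mset m2 us2))"
      using some_nf_RApp_arg_below[OF ub, of u t "add_mset m2 w"] w by (simp add: add_mset_commute)
  qed
  also have "\<dots> = nf_sum ((\<lambda>t'. RApp u (add_mset t' us2)) ` T2)"
    using nf_sum_rappR_below[OF ub r2] eq by simp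
  finally show ?thesis .
qed

lemma nf_sum_rlam_below:
  "tree_nf_unique_below n \<Longrightarrow> rsize (RLam u) \<le> n
    \<Longrightarrow> rred u T \<Longrightarrow> nf_sum (RLam ` T) = RLam ` some_nf u"
proof -
  assume ub: "tree_nf_unique_below n" and s: "rsize (RLam u) \<le> n" and r: "rred u T"
  have "nf_sum (RLam ` T) = (\<Union>x\<in>T. some_nf (RLam x))" by (simp add: nf_sum_def)
  also have "\<dots> = (\<Union>x\<in>T. RLam ` some_nf x)"
  proof (rule SUP_cong[OF refl])
    fix x assume "x \<in> T"
    then have "rsize x < rsize u" using rsize_rred r by blast
    then show "some_nf (RLam x) = RLam ` some_nf x" using some_nf_RLam_below[OF ub] s by simp
  qed
  also have "\<dots> = RLam ` nf_sum T" by (auto simp: nf_sum_def)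
  also have "nf_sum T = some_nf u" using some_nf_rred_below[OF ub _ r] s by simp
  finally show ?thesis .
qed

lemma nf_sum_rred_redex_below:
  assumes ub: "tree_nf_unique_below (rsize (RApp (RLam u) ts))" and rB: "rred (RApp (RLam u) ts) B"
  shows "nf_sum (lsubst u ts) = nf_sum B"
proof -
  from rB[unfolded rred_RApp_iff] consider
    "B = lsubst u ts" | T where "rred (RLam u) T" "B = (\<lambda>s'. RApp s' ts) ` T"
    | t us T where "ts = add_mset t us" "rred t T" "B = (\<lambda>t'. RApp (RLam u) (add_mset t' us)) ` T"
    by auto
  then show ?thesis
  proof cases
    case (2 T)
    then obtain U where "rred u U" "T = RLam ` U" by (auto simp: rred_RLam_iff)
    then show ?thesis using nf_sum_redex_body_below[OF ub] 2 by simp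
  next
    case (3 t us T)
    then show ?thesis using nf_sum_redex_bag_below[of u t us T] ub by simp
  qed simp
qed

lemma nf_sum_rred_fun_below:
  assumes ub: "tree_nf_unique_below (rsize (RApp u ts))" and rA: "rred u T" and rB: "rred (RApp u ts) B"
  shows "nf_sum ((\<lambda>s'. RApp s' ts) ` T) = nf_sum B"
proof -
  from rB[unfolded rred_RApp_iff] consider
    w where "u = RLam w" "B = lsubst w ts" | T' where "rred u T'" "B = (\<lambda>s'. RApp s' ts) ` T'"
    | t us T' where "ts = add_mset t us" "rred t T'" "B = (\<lambda>t'. RApp u (add_mset t' us)) ` T'"
    by auto
  then show ?thesis
  proof cases
    case (1 w)
    then show ?thesis using nf_sum_rred_redex_below[of w ts] ub rred.rappL[OF rA, of ts] by simp
  next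
    case (2 T')
    then show ?thesis using nf_sum_rappL_below[OF ub rA] nf_sum_rappL_below[OF ub 2(1)] by simp
  next
    case (3 t us T')
    then show ?thesis using nf_sum_rappL_rappR_below[of u t us T T'] ub rA by simp
  qed
qed

lemma nf_sum_rred_arg_below:
  assumes ub: "tree_nf_unique_below (rsize (RApp u (add_mset t us)))" and rA: "rred t T"
    and rB: "rred (RApp u (add_mset t us)) B"
  shows "nf_sum ((\<lambda>t'. RApp u (add_mset t' us)) ` T) = nf_sum B"
proof -
  from rB[unfolded rred_RApp_iff] consider
    w where "u = RLam w" "B = lsubst w (add_mset t us)"
    | T' where "rred u T'" "B = (\<lambda>s'. RApp s' (add_mset t us)) ` T'"
    | t2 us2 T2 where "add_mset t us = add_mset t2 us2" "rred t2 T2" "B = (\<lambda>t'. RApp u (add_mset t' us2)) ` T2"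
    by blast
  then show ?thesis
  proof cases
    case (1 w)
    then show ?thesis using nf_sum_rred_redex_below[of w "add_mset t us"] ub rred.rappR[OF rA, of u us] by simp
  next
    case (2 T')
    then show ?thesis using nf_sum_rred_fun_below[OF ub 2(1)] rred.rappR[OF rA, of u us] by simp
  next
    case (3 t2 us2 T2)
    then show ?thesis using nf_sum_rappR_rappR_below[of u t us t2 us2 T T2] ub rA by simp
  qed
qed

lemma nf_sum_rred_eq_below:
  assumes ub: "tree_nf_unique_below (rsize s)" and rA: "rred s A" and rB: "rred s B"
  shows "nf_sum A = nf_sum B"
  using rA
proof cases
  case (rlam u T)
  from rB[unfolded rlam rred_RLam_iff] obtain T' where "rred u T'" "B = RLam ` T'" by auto
  then show ?thesis
    using nf_sum_rlam_below[OF ub _ rlam(3)] nf_sum_rlam_below[OF ub _ \<open>rred u T'\<close>] rlam by simp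
qed (use ub rB nf_sum_rred_redex_below nf_sum_rred_fun_below nf_sum_rred_arg_below in auto)

lemma tree_nf_eq_nf_sum_below:
  "tree_nf_unique_below (rsize x) \<Longrightarrow> tree_nf x X
    \<Longrightarrow> rred x A \<Longrightarrow> X = nf_sum A"
proof -
  assume ub: "tree_nf_unique_below (rsize x)" and n: "tree_nf x X" and rA: "rred x A"
  from n show ?thesis
  proof cases
    case nf_leaf
    then show ?thesis using rA by (auto simp: rnf_def)
  next
    case (nf_node B F)
    have "\<forall>b\<in>B. F b = some_nf b" using ub nf_node rsize_rred unfolding tree_nf_unique_below_def
      by blast
    then have "X = nf_sum B" using nf_node by (simp add: nf_sum_def)
    then show ?thesis using nf_sum_rred_eq_below[OF ub nf_node(2) rA] by simp
  qed
qed

lemma tree_nf_unique: "tree_nf_unique_below n"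
proof (induction n)
  case 0
  then show ?case by (simp add: tree_nf_unique_below_def)
next
  case (Suc n)
  show ?case unfolding tree_nf_unique_below_def
  proof (intro allI impI)
    fix x X assume s: "rsize x < Suc n" and nx: "tree_nf x X"
    show "X = some_nf x"
    proof (cases "rsize x < n")
      case True
      then show ?thesis using Suc nx unfolding tree_nf_unique_below_def by blast
    next
      case False
      then have ub: "tree_nf_unique_below (rsize x)" using Suc s by (metis less_SucE)
      show ?thesis
      proof (cases "rnf x")
        case True
        have "X = {x}" using nx True by (cases rule: tree_nf.cases) (auto simp: rnf_def)
        moreover have "some_nf x = {x}" using tree_nf_some_nf[of x] True
          by (cases rule: tree_nf.cases) (auto simp: rnf_def)
        ultimately show ?thesis by simp
      next
        case False
        then obtain A where rA: "rred x A" by (auto simp: rnf_def)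
        show ?thesis using tree_nf_eq_nf_sum_below[OF ub nx rA] tree_nf_eq_nf_sum_below[OF ub tree_nf_some_nf rA] by simp
      qed
    qed
  qed
qed

lemma some_nf_rred: "rred x S \<Longrightarrow> some_nf x = nf_sum S"
  using some_nf_rred_below[OF tree_nf_unique[of "Suc (rsize x)"]] by simp

lemma some_nf_rnf: "rnf x \<Longrightarrow> some_nf x = {x}"
  using tree_nf_unique[of "Suc (rsize x)"] nf_leaf[of x] unfolding tree_nf_unique_below_def by auto

lemma nf_sum_singleton [simp]: "nf_sum {x} = some_nf x"
  by (simp add: nf_sum_def)

lemma rsum_red_nf_sum: "rsum_red S S' \<Longrightarrow> nf_sum S' = nf_sum S \<and> finite S'"
proof -
  assume a: "rsum_red S S'"
  have "finite S \<and> (\<exists>s0\<in>S. \<exists>T0 T. rred s0 T0 \<and>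
      (\<forall>s\<in>S - {s0}. rred s (T s) \<or> T s = {s}) \<and> S' = T0 \<union> (\<Union>s\<in>S - {s0}. T s))"
    using a unfolding rsum_red_def .
  then obtain s0 T0 T where h: "finite S" "s0 \<in> S" "rred s0 T0"
    "\<forall>s\<in>S - {s0}. rred s (T s) \<or> T s = {s}"
    "S' = T0 \<union> (\<Union>s\<in>S - {s0}. T s)" by blast
  have eq: "\<forall>s\<in>S - {s0}. nf_sum (T s) = some_nf s"
  proof
    fix s assume "s \<in> S - {s0}"
    then have "rred s (T s) \<or> T s = {s}" using h(4) by blast
    then show "nf_sum (T s) = some_nf s"
    proof
      assume "rred s (T s)" then show ?thesis using some_nf_rred[of s "T s"] by simp
    qed simp
  qed
  have "nf_sum S' = nf_sum T0 \<union> (\<Union>s\<in>S - {s0}. nf_sum (T s))" using h(5)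
    by (auto simp: nf_sum_def)
  also have "\<dots> = some_nf s0 \<union> (\<Union>s\<in>S - {s0}. some_nf s)"
    using eq some_nf_rred[OF h(3)] by simp
  also have "\<dots> = nf_sum S" using h(2) by (auto simp: nf_sum_def)
  finally have "nf_sum S' = nf_sum S" .
  moreover have "finite S'"
  proof -
    have "\<forall>s\<in>S - {s0}. finite (T s)"
    proof
      fix s assume "s \<in> S - {s0}"
      then have "rred s (T s) \<or> T s = {s}" using h(4) by blast
      then show "finite (T s)" using rred_finite[of s "T s"] by auto
    qed
    then show ?thesis using h(1) rred_finite[OF h(3)] h(5) by simp
  qed
  ultimately show ?thesis by simp
qed

lemma rsum_reds_nf_sum:
  "rsum_red\<^sup>*\<^sup>* S S' \<Longrightarrow> finite S
    \<Longrightarrow> nf_sum S' = nf_sum S \<and> finite S'"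
proof (induction rule: rtranclp_induct)
  case (step y z)
  then show ?case using rsum_red_nf_sum[OF step(2)] by simp
qed simp

lemma rsum_red_one:
  "finite T \<Longrightarrow> x \<in> T \<Longrightarrow> rred x S
    \<Longrightarrow> rsum_red T (S \<union> (T - {x}))"
  unfolding rsum_red_def by (intro conjI bexI[of _ x] exI[of _ S] exI[of _ "\<lambda>s. {s}"]) auto

lemma rnormal_rnf: "rnormal T \<Longrightarrow> finite T \<Longrightarrow> x \<in> T \<Longrightarrow> rnf x"
  using rsum_red_one by (auto simp: rnormal_def rnf_def)

lemma rnormal_if_rnf: "(\<forall>x\<in>T. rnf x) \<Longrightarrow> rnormal T"
  unfolding rnormal_def rsum_red_def rnf_def by blast

lemma rsum_red_normalizing:
  "finite S \<Longrightarrow> \<exists>T. rsum_red\<^sup>*\<^sup>* S T \<and> rnormal T"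
proof (induction "mset_set S" arbitrary: S rule: wf_induct_rule[OF wf_mult[OF wf_measure[of rsize]]])
  case (1 S)
  show ?case
  proof (cases "\<forall>x\<in>S. rnf x")
    case True
    then show ?thesis using rnormal_if_rnf by blast
  next
    case False
    then obtain x S0 where x: "x \<in> S" "rred x S0" by (auto simp: rnf_def)
    let ?S' = "S0 \<union> (S - {x})"
    have step: "rsum_red S ?S'" using rsum_red_one 1(2) x by blast
    have fS0: "finite S0" using rred_finite x by blast
    have S'eq: "?S' = (S - {x}) \<union> (S0 - (S - {x}))" by auto
    have "mset_set ?S' = mset_set (S - {x}) + mset_set (S0 - (S - {x}))"
      unfolding S'eq using 1(2) fS0 by (subst mset_set_Union) auto
    moreover have "mset_set S = mset_set (S - {x}) + {#x#}"
      using 1(2) x(1) by (metis add_mset_add_single mset_set.remove)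
    moreover have "(mset_set (S - {x}) + mset_set (S0 - (S - {x})), mset_set (S - {x}) + {#x#}) \<in> mult (measure rsize)"
      by (rule one_step_implies_mult) (use fS0 rsize_rred[OF x(2)] in auto)
    ultimately have "(mset_set ?S', mset_set S) \<in> mult (measure rsize)" by simp
    moreover have "finite ?S'" using fS0 1(2) by auto
    ultimately obtain T where "rsum_red\<^sup>*\<^sup>* ?S' T" "rnormal T" using 1(1) by blast
    then show ?thesis using step by (meson converse_rtranclp_into_rtranclp)
  qed
qed

lemma nf_r_eq_some_nf: "nf_r s = some_nf s"
proof -
  obtain T where T: "rsum_red\<^sup>*\<^sup>* {s} T" "rnormal T" using rsum_red_normalizing[of "{s}"] by auto
  have uniq: "T' = some_nf s" if "rsum_red\<^sup>*\<^sup>* {s} T'" "rnormal T'" for T'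
  proof -
    have "nf_sum T' = some_nf s" "finite T'" using rsum_reds_nf_sum[OF that(1)] by auto
    moreover have "\<forall>x\<in>T'. rnf x" using rnormal_rnf that(2) calculation(2) by blast
    then have "nf_sum T' = T'" using some_nf_rnf by (auto simp: nf_sum_def)
    ultimately show ?thesis by simp
  qed
  show ?thesis unfolding nf_r_def
    by (rule the_equality) (use T uniq in auto)
qed

lemma nf_r_rred: "rred s S \<Longrightarrow> nf_r s = (\<Union>x\<in>S. nf_r x)"
  by (simp add: nf_r_eq_some_nf some_nf_rred nf_sum_def)

lemma nf_r_rnf: "rnf s \<Longrightarrow> nf_r s = {s}"
  by (simp add: nf_r_eq_some_nf some_nf_rnf)

section \<open>Taylor approximation and head reduction\<close>

lemma tm_case_id: "(case N of Var j \<Rightarrow> Var j | Lam P \<Rightarrow> Lam P | App P Q \<Rightarrow> App P Q) = N"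
  by (cases N) auto

lemma lift_simps [simp]:
  "lift k (Var n) = Var (if n < k then n else Suc n)"
  "lift k (Lam P) = Lam (lift (Suc k) P)"
  "lift k (App P Q) = App (lift k P) (lift k Q)"
  by (subst lift.code; simp)+

lemma subst_simps [simp]:
  "subst k N (Var n) = (if n = k then N else Var (if k < n then n - 1 else n))"
  "subst k N (Lam P) = Lam (subst (Suc k) (lift 0 N) P)"
  "subst k N (App P Q) = App (subst k N P) (subst k N Q)"
  by (subst subst.code; simp add: tm_case_id)+

lemma taylor_RVar_iff: "taylor (RVar x) M \<longleftrightarrow> M = Var x"
  by (auto elim: taylor.cases intro: taylor.intros)

lemma taylor_RLam_iff: "taylor (RLam s) M \<longleftrightarrow> (\<exists>P. M = Lam P \<and> taylor s P)"
  by (auto elim: taylor.cases intro: taylor.intros)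

lemma taylor_RApp_iff:
  "taylor (RApp s ts) M \<longleftrightarrow> (\<exists>P Q. M = App P Q \<and> taylor s P \<and> (\<forall>t\<in>#ts. taylor t Q))"
  by (auto elim: taylor.cases intro: taylor.intros)

lemma taylor_Var_iff: "taylor s (Var x) \<longleftrightarrow> s = RVar x"
  by (auto elim: taylor.cases intro: taylor.intros)

lemma taylor_Lam_iff: "taylor s (Lam P) \<longleftrightarrow> (\<exists>u. s = RLam u \<and> taylor u P)"
  by (auto elim: taylor.cases intro: taylor.intros)

lemma taylor_App_iff:
  "taylor s (App P Q) \<longleftrightarrow> (\<exists>a ts. s = RApp a ts \<and> taylor a P \<and> (\<forall>t\<in>#ts. taylor t Q))"
  by (auto elim: taylor.cases intro: taylor.intros)

lemma taylor_lift: "taylor t N \<Longrightarrow> taylor (rlift j t) (lift j N)"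
  by (induction arbitrary: j rule: taylor.induct) (auto simp: taylor_RVar_iff taylor_RLam_iff taylor_RApp_iff)

lemma taylor_liftD: "taylor t (lift j N) \<Longrightarrow> \<exists>t0. taylor t0 N \<and> t = rlift j t0"
proof (induction t arbitrary: j N)
  case (RVar x)
  then show ?case by (cases N) (auto simp: taylor_RVar_iff intro!: exI[of _ "RVar (case N of Var y \<Rightarrow> y)"] taylor.intros)
next
  case (RLam s)
  then obtain P where "N = Lam P" "taylor s (lift (Suc j) P)" by (cases N) (auto simp: taylor_RLam_iff)
  moreover from RLam.IH[OF this(2)] obtain t0 where "taylor t0 P" "s = rlift (Suc j) t0" by blast
  ultimately show ?case by (intro exI[of _ "RLam t0"]) (auto simp: taylor_RLam_iff)
next
  case (RApp s ts)
  then obtain P Q where h: "N = App P Q" "taylor s (lift j P)" "\<forall>t\<in>#ts. taylor t (lift j Q)"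
    by (cases N) (auto simp: taylor_RApp_iff)
  obtain s0 where s0: "taylor s0 P" "s = rlift j s0" using RApp.IH(1) h by blast
  have "\<forall>t\<in>#ts. \<exists>t0. taylor t0 Q \<and> t = rlift j t0" using RApp.IH(2) h by blast
  then obtain g where g: "\<forall>t\<in>#ts. taylor (g t) Q \<and> t = rlift j (g t)" by metis
  have "image_mset (rlift j) (image_mset g ts) = ts"
    using g by (simp add: multiset.map_comp comp_def multiset.map_ident_strong)
  then show ?case using h s0 g by (intro exI[of _ "RApp s0 (image_mset g ts)"]) (auto simp: taylor_RApp_iff)
qed

lemma taylor_lsub_subst:
  shows "lsub k s ts v \<Longrightarrow> taylor s M
    \<Longrightarrow> (\<forall>t\<in>#ts. taylor t N) \<Longrightarrow> taylor v (subst k N M)"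
    and "lsub_ms k us ts vs \<Longrightarrow> (\<forall>u\<in>#us. taylor u M)
      \<Longrightarrow> (\<forall>t\<in>#ts. taylor t N)
        \<Longrightarrow> (\<forall>v\<in>#vs. taylor v (subst k N M))"
proof (induction arbitrary: M N and M N rule: lsub_lsub_ms.inducts)
  case (ls_hit k t)
  then show ?case by (auto simp: taylor_RVar_iff)
next
  case (ls_miss n k)
  then show ?case by (auto simp: taylor_RVar_iff)
next
  case (ls_lam k s ts s')
  then show ?case by (auto simp: taylor_RLam_iff taylor_lift)
next
  case (ls_app k s ts1 s' us ts2 us')
  then show ?case by (auto simp: taylor_RApp_iff)
next
  case (lsm_empty k)
  then show ?case by auto
next
  case (lsm_add k us ts1 us' u ts2 u')
  then show ?case by auto
qed

lemma taylor_subst_VarD: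
  assumes "taylor v (subst k N (Var n))"
  shows "\<exists>s ts. taylor s (Var n) \<and> (\<forall>t\<in>#ts. taylor t N) \<and> lsub k s ts v"
proof (cases "n = k")
  case True
  then show ?thesis using assms
    by (intro exI[of _ "RVar k"] exI[of _ "{#v#}"]) (auto simp: taylor_RVar_iff intro: lsub_lsub_ms.intros)
next
  case False
  then show ?thesis using assms
    by (intro exI[of _ "RVar n"] exI[of _ "{#}"]) (auto simp: taylor_Var_iff taylor_RVar_iff lsub_RVar_iff)
qed

lemma lsub_ms_image_elementwise:
  "\<forall>b\<in>#bs. lsub k (f b) (g b) b
    \<Longrightarrow> lsub_ms k (image_mset f bs) (sum_mset (image_mset g bs)) bs"
proof (induction bs)
  case (add b bs)
  then show ?case
    using lsub_lsub_ms.lsm_add[of k "image_mset f bs" "sum_mset (image_mset g bs)" bs "f b" "g b" b]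
    by (simp add: add.commute)
qed (auto intro: lsub_lsub_ms.intros)

lemma taylor_substD:
  "taylor v (subst k N M)
    \<Longrightarrow> \<exists>s ts. taylor s M \<and> (\<forall>t\<in>#ts. taylor t N) \<and> lsub k s ts v"
proof (induction v arbitrary: k N M)
  case (RVar x)
  then show ?case using taylor_subst_VarD by (cases M) (auto simp: taylor_RVar_iff)
next
  case (RLam v1)
  show ?case
  proof (cases M)
    case (Lam P)
    then have "taylor v1 (subst (Suc k) (lift 0 N) P)" using RLam.prems by (auto simp: taylor_RLam_iff)
    from RLam.IH[OF this] obtain s ts where h: "taylor s P" "\<forall>t\<in>#ts. taylor t (lift 0 N)"
      "lsub (Suc k) s ts v1"
      by blast
    then have "\<forall>t\<in>#ts. \<exists>t0. taylor t0 N \<and> t = rlift 0 t0" using taylor_liftD by blast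
    then obtain g where g: "\<forall>t\<in>#ts. taylor (g t) N \<and> t = rlift 0 (g t)" by metis
    have "image_mset (rlift 0) (image_mset g ts) = ts"
      using g by (simp add: multiset.map_comp comp_def multiset.map_ident_strong)
    then have "lsub k (RLam s) (image_mset g ts) (RLam v1)" using h(3) by (auto intro: lsub_lsub_ms.intros)
    then show ?thesis using Lam h g
      by (intro exI[of _ "RLam s"] exI[of _ "image_mset g ts"]) (auto simp: taylor_RLam_iff)
  qed (use RLam taylor_subst_VarD in \<open>auto simp: taylor_RLam_iff\<close>)
next
  case (RApp a bs)
  show ?case
  proof (cases M)
    case (App P Q)
    then have ha: "taylor a (subst k N P)" and hb: "\<forall>b\<in>#bs. taylor b (subst k N Q)"
      using RApp.prems by (auto simp: taylor_RApp_iff)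
    from RApp.IH(1)[OF ha] obtain s ts where s: "taylor s P" "\<forall>t\<in>#ts. taylor t N" "lsub k s ts a"
      by blast
    have "\<forall>b\<in>#bs. \<exists>sb tsb. taylor sb Q \<and> (\<forall>t\<in>#tsb. taylor t N) \<and> lsub k sb tsb b"
      using RApp.IH(2) hb by blast
    then obtain f g
      where fg: "\<forall>b\<in>#bs. taylor (f b) Q \<and> (\<forall>t\<in>#g b. taylor t N) \<and> lsub k (f b) (g b) b"
      by metis
    have "lsub k (RApp s (image_mset f bs)) (ts + sum_mset (image_mset g bs)) (RApp a bs)"
      using s fg lsub_ms_image_elementwise[of bs k f g] by (auto intro: lsub_lsub_ms.intros)
    moreover have "taylor (RApp s (image_mset f bs)) M" using App s fg by (auto simp: taylor_RApp_iff)
    moreover have "\<forall>t\<in>#ts + sum_mset (image_mset g bs). taylor t N" using s fg by auto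
    ultimately show ?thesis by blast
  qed (use RApp taylor_subst_VarD in \<open>auto simp: taylor_RApp_iff\<close>)
qed

definition rred1 :: "rtm \<Rightarrow> rtm \<Rightarrow> bool" where
  "rred1 x y \<longleftrightarrow> (\<exists>S. rred x S \<and> y \<in> S)"

lemma rtranclp_map:
  assumes "\<And>x y. r x y \<Longrightarrow> r' (f x) (f y)"
  shows "r\<^sup>*\<^sup>* x y \<Longrightarrow> r'\<^sup>*\<^sup>* (f x) (f y)"
  by (induction rule: rtranclp_induct) (auto intro: rtranclp.rtrancl_into_rtrancl assms)

lemma rred1_rtranclp_RLam: "rred1\<^sup>*\<^sup>* a b \<Longrightarrow> rred1\<^sup>*\<^sup>* (RLam a) (RLam b)"
  by (rule rtranclp_map[where f=RLam]) (auto simp: rred1_def intro: rred.rlam)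

lemma rred1_rtranclp_RApp_fun:
  "rred1\<^sup>*\<^sup>* a b \<Longrightarrow> rred1\<^sup>*\<^sup>* (RApp a ts) (RApp b ts)"
  by (rule rtranclp_map[where f="\<lambda>x. RApp x ts"]) (auto simp: rred1_def intro: rred.rappL)

lemma rred1_rtranclp_RApp_arg:
  "rred1\<^sup>*\<^sup>* a b \<Longrightarrow> rred1\<^sup>*\<^sup>* (RApp s (add_mset a us)) (RApp s (add_mset b us))"
  by (rule rtranclp_map[where f="\<lambda>x. RApp s (add_mset x us)"]) (auto simp: rred1_def intro: rred.rappR)

lemma rred1_rtranclp_RApp_bag:
  "\<forall>b\<in>#bs. rred1\<^sup>*\<^sup>* (g b) b
    \<Longrightarrow> rred1\<^sup>*\<^sup>* (RApp a (C + image_mset g bs)) (RApp a (C + bs))"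
proof (induction bs arbitrary: C)
  case (add b bs)
  have "rred1\<^sup>*\<^sup>* (RApp a (add_mset (g b) (C + image_mset g bs))) (RApp a (add_mset b (C + image_mset g bs)))"
    using rred1_rtranclp_RApp_arg add.prems by simp
  moreover have "rred1\<^sup>*\<^sup>* (RApp a (add_mset b C + image_mset g bs)) (RApp a (add_mset b C + bs))"
    using add.IH[of "add_mset b C"] add.prems by simp
  ultimately show ?case by (simp add: ac_simps)
qed simp

lemma nf_r_rred1_rtranclp: "rred1\<^sup>*\<^sup>* x y \<Longrightarrow> nf_r y \<subseteq> nf_r x"
proof (induction rule: rtranclp_induct)
  case (step y z)
  then obtain S where "rred y S" "z \<in> S" by (auto simp: rred1_def)
  then show ?case using step.IH nf_r_rred by blast
qed simp

lemma taylor_beta_backward: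
  "beta M M' \<Longrightarrow> taylor s' M'
    \<Longrightarrow> \<exists>s. taylor s M \<and> rred1\<^sup>*\<^sup>* s s'"
proof (induction arbitrary: s' rule: beta.induct)
  case (redex M N)
  then obtain s0 ts where h: "taylor s0 M" "\<forall>t\<in>#ts. taylor t N" "lsub 0 s0 ts s'"
    using taylor_substD by (fastforce simp: subst0_def)
  have "rred1 (RApp (RLam s0) ts) s'" unfolding rred1_def using rred.rbase h(3) by (auto simp: lsubst_def)
  moreover have "taylor (RApp (RLam s0) ts) (App (Lam M) N)" using h
    by (auto simp: taylor_RApp_iff taylor_RLam_iff)
  ultimately show ?case by blast
next
  case (lam M M')
  then obtain x where x: "s' = RLam x" "taylor x M'" by (auto simp: taylor_Lam_iff)
  then obtain x0 where "taylor x0 M" "rred1\<^sup>*\<^sup>* x0 x" using lam.IH by blast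
  then show ?case using x rred1_rtranclp_RLam by (auto simp: taylor_RLam_iff intro!: exI[of _ "RLam x0"])
next
  case (appL M M' N)
  then obtain a ts where h: "s' = RApp a ts" "taylor a M'" "\<forall>t\<in>#ts. taylor t N"
    by (auto simp: taylor_App_iff)
  then obtain a0 where "taylor a0 M" "rred1\<^sup>*\<^sup>* a0 a" using appL.IH by blast
  then show ?case using h rred1_rtranclp_RApp_fun by (auto simp: taylor_RApp_iff intro!: exI[of _ "RApp a0 ts"])
next
  case (appR N N' M)
  then obtain a bs where h: "s' = RApp a bs" "taylor a M" "\<forall>b\<in>#bs. taylor b N'"
    by (auto simp: taylor_App_iff)
  then have "\<forall>b\<in>#bs. \<exists>b0. taylor b0 N \<and> rred1\<^sup>*\<^sup>* b0 b" using appR.IH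
    by blast
  then obtain g where g: "\<forall>b\<in>#bs. taylor (g b) N \<and> rred1\<^sup>*\<^sup>* (g b) b" by metis
  have "rred1\<^sup>*\<^sup>* (RApp a (image_mset g bs)) (RApp a bs)"
    using rred1_rtranclp_RApp_bag[of bs g a "{#}"] g by simp
  moreover have "taylor (RApp a (image_mset g bs)) (App M N)" using h g by (auto simp: taylor_RApp_iff)
  ultimately show ?case using h by blast
qed

lemma taylor_beta_star_backward:
  "beta\<^sup>*\<^sup>* M M' \<Longrightarrow> taylor s' M'
    \<Longrightarrow> \<exists>s. taylor s M \<and> rred1\<^sup>*\<^sup>* s s'"
proof (induction arbitrary: s' rule: rtranclp_induct)
  case (step y z)
  from taylor_beta_backward[OF step(2) step(4)] obtain s1 where "taylor s1 y" "rred1\<^sup>*\<^sup>* s1 s'"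
    by blast
  moreover from step(3)[OF this(1)] obtain s where "taylor s M" "rred1\<^sup>*\<^sup>* s s1" by blast
  ultimately show ?case by (meson rtranclp_trans)
qed blast

lemma taylor_hred_forward:
  "hred M M' \<Longrightarrow> taylor s M
    \<Longrightarrow> \<exists>S. rred s S \<and> (\<forall>x\<in>S. taylor x M')"
proof (induction arbitrary: s rule: hred.induct)
  case (hredex N P)
  then obtain u ts where h: "s = RApp (RLam u) ts" "taylor u N" "\<forall>t\<in>#ts. taylor t P"
    by (auto simp: taylor_App_iff taylor_Lam_iff)
  have "\<forall>x\<in>lsubst u ts. taylor x (subst0 N P)"
    using taylor_lsub_subst(1)[of 0 u ts _ N P] h by (auto simp: lsubst_def subst0_def)
  then show ?case using h rred.rbase by blast
next
  case (hlam M M')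
  then obtain u where "s = RLam u" "taylor u M" by (auto simp: taylor_Lam_iff)
  moreover obtain S where "rred u S" "\<forall>x\<in>S. taylor x M'" using hlam.IH calculation(2) by blast
  ultimately show ?case using rred.rlam by (fastforce simp: taylor_RLam_iff)
next
  case (happ P P' Q)
  then obtain a ts where h: "s = RApp a ts" "taylor a P" "\<forall>t\<in>#ts. taylor t Q"
    by (auto simp: taylor_App_iff)
  then obtain S where "rred a S" "\<forall>x\<in>S. taylor x P'" using happ.IH by blast
  then show ?case using h rred.rappL by (fastforce simp: taylor_RApp_iff)
qed

lemma hnf_App_iff: "hnf (App P Q) \<longleftrightarrow> head_var_spine P"
  by (auto elim: hnf.cases head_var_spine.cases intro: hnf.intros head_var_spine.intros)

lemma hnf_Var: "hnf (Var x)"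
  by (auto intro: hnf.intros head_var_spine.intros)

lemma head_var_spine_Lam [simp]: "\<not> head_var_spine (Lam P)"
  by (auto elim: head_var_spine.cases)

lemma hnf_Lam_iff: "hnf (Lam P) \<longleftrightarrow> hnf P"
  by (auto elim: hnf.cases intro: hnf.intros)

lemma head_var_spine_App_iff: "head_var_spine (App P Q) \<longleftrightarrow> head_var_spine P"
  by (auto elim: head_var_spine.cases intro: head_var_spine.intros)

text \<open>The approximant \<open>s\<close> only serves to make the head spine of \<open>M\<close> finite, so that induction applies.\<close>
lemma hred_exists: "taylor s M \<Longrightarrow> \<not> hnf M \<Longrightarrow> \<exists>M'. hred M M'"
proof (induction rule: taylor.induct)
  case (1 x)
  then show ?case using hnf_Var by blast
next
  case (2 s M)
  then show ?case using hnf.intros(2) hred.hlam by blast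
next
  case (3 s M ts N)
  show ?case
  proof (cases M)
    case (Lam P)
    then show ?thesis using hred.hredex by blast
  next
    case (Var x)
    then show ?thesis using 3 by (simp add: hnf_App_iff head_var_spine.intros)
  next
    case (App P Q)
    then have "\<not> hnf M" using 3 by (auto simp: hnf_App_iff head_var_spine_App_iff)
    then obtain M' where "hred M M'" using 3 by blast
    then show ?thesis using App hred.happ[of M M' N] by auto
  qed
qed

text \<open>Take all bags empty.\<close>
lemma hnf_taylor_rnf: "hnf N \<Longrightarrow> \<exists>s. taylor s N \<and> rnf s"
proof (induction rule: hnf.induct)
  case (1 M)
  have "\<exists>s. taylor s M \<and> rnf s \<and> (\<forall>u. s \<noteq> RLam u)" using 1
  proof (induction rule: head_var_spine.induct)
    case (1 y)
    then show ?case by (intro exI[of _ "RVar y"]) (auto simp: rnf_def taylor_RVar_iff)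
  next
    case (2 P Q)
    then obtain s where s: "taylor s P" "rnf s" "\<forall>u. s \<noteq> RLam u" by blast
    have "rnf (RApp s {#})" using s by (auto simp: rnf_def rred_RApp_iff)
    then show ?case using s by (intro exI[of _ "RApp s {#}"]) (auto simp: taylor_RApp_iff)
  qed
  then show ?case by blast
next
  case (2 M)
  then obtain s where "taylor s M" "rnf s" by blast
  then show ?case by (intro exI[of _ "RLam s"]) (auto simp: taylor_RLam_iff rnf_RLam_iff)
qed

lemma taylor_nf_r_nonempty_if_beta_hnf:
  assumes "beta\<^sup>*\<^sup>* M N" and "hnf N"
  shows "\<exists>s. taylor s M \<and> nf_r s \<noteq> {}"
proof -
  obtain s0 where s0: "taylor s0 N" "rnf s0" using hnf_taylor_rnf[OF assms(2)] by blast
  obtain s where s: "taylor s M" "rred1\<^sup>*\<^sup>* s s0"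
    using taylor_beta_star_backward[OF assms(1) s0(1)] by blast
  have "s0 \<in> nf_r s" using nf_r_rred1_rtranclp[OF s(2)] nf_r_rnf[OF s0(2)] by blast
  then show ?thesis using s by blast
qed

text \<open>Head reduction of \<open>M\<close> is simulated by resource reduction of any approximant, which strictly
  decreases its size; an approximant with a nonzero normal form therefore bounds the length of the
  head reduction.\<close>
lemma hred_hnf_if_taylor_nf_r_nonempty:
  "taylor s M \<Longrightarrow> nf_r s \<noteq> {} \<Longrightarrow> \<exists>N. hred\<^sup>*\<^sup>* M N \<and> hnf N"
proof (induction s arbitrary: M rule: measure_induct_rule[where f=rsize])
  case (less s)
  show ?case
  proof (cases "hnf M")
    case False
    then obtain M' where hr: "hred M M'" using hred_exists less.prems by blast
    from taylor_hred_forward[OF hr less.prems(1)] obtain S where S: "rred s S"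
      "\<forall>x\<in>S. taylor x M'" by blast
    obtain x where x: "x \<in> S" "nf_r x \<noteq> {}" using less.prems(2) nf_r_rred[OF S(1)] by auto
    then obtain N where "hred\<^sup>*\<^sup>* M' N" "hnf N" using less.IH S rsize_rred by blast
    then show ?thesis using hr by (meson converse_rtranclp_into_rtranclp)
  qed blast
qed

section \<open>The set \<open>\<Lambda>\<^sup>0\<^sup>0\<^sup>1\<close>\<close>

lemma subterm_at_append:
  "subterm_at M (p @ q) = (case subterm_at M p of None \<Rightarrow> None | Some X \<Rightarrow> subterm_at X q)"
proof (induction p arbitrary: M)
  case (Cons d ps)
  show ?case by (cases d; cases M) (auto simp: Cons)
qed simp

lemma subterm_at_Cons: "subterm_at M [d] = Some P \<Longrightarrow> subterm_at M (d # ps) = subterm_at P ps"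
  by (cases d; cases M) auto

lemma subterm_at_lift_eq_None_iff: "subterm_at (lift k N) p = None \<longleftrightarrow> subterm_at N p = None"
proof (induction p arbitrary: k N)
  case (Cons d ps)
  show ?case by (cases d; cases N) (auto simp: Cons)
qed simp

definition branch :: "tm \<Rightarrow> (nat \<Rightarrow> dir) \<Rightarrow> bool" where
  "branch M f \<longleftrightarrow> (\<forall>n. subterm_at M (map f [0..<n]) \<noteq> None)"

definition inf_often_arg :: "(nat \<Rightarrow> dir) \<Rightarrow> bool" where
  "inf_often_arg f \<longleftrightarrow> (\<forall>n. \<exists>m\<ge>n. f m = DArg)"

lemma Lambda001_iff_branch:
  "M \<in> Lambda001 \<longleftrightarrow> (\<forall>f. branch M f \<longrightarrow> inf_often_arg f)"
  by (simp add: Lambda001_def branch_def inf_often_arg_def)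

lemma inf_often_arg_shiftD: "inf_often_arg (\<lambda>i. f (k + i)) \<Longrightarrow> inf_often_arg f"
  unfolding inf_often_arg_def by (meson le_add2 order.trans)

lemma inf_often_arg_Suc_iff: "inf_often_arg (\<lambda>n. f (Suc n)) \<longleftrightarrow> inf_often_arg f"
proof
  assume "inf_often_arg f"
  then show "inf_often_arg (\<lambda>n. f (Suc n))"
    unfolding inf_often_arg_def by (metis Suc_le_D Suc_le_mono)
qed (use inf_often_arg_shiftD[of f 1] in simp)

lemma branch_Cons_iff:
  "branch M f \<longleftrightarrow> (\<exists>X. subterm_at M [f 0] = Some X \<and> branch X (\<lambda>n. f (Suc n)))"
proof -
  have prefix: "map f [0..<Suc n] = f 0 # map (\<lambda>i. f (Suc i)) [0..<n]" for n
    by (induction n) auto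
  show ?thesis
  proof
    assume b: "branch M f"
    have "subterm_at M (map f [0..<Suc 0]) \<noteq> None" using b unfolding branch_def by blast
    then obtain X where X: "subterm_at M [f 0] = Some X" by auto
    have "branch X (\<lambda>n. f (Suc n))" unfolding branch_def
    proof
      fix n
      have "subterm_at M (map f [0..<Suc n]) \<noteq> None" using b unfolding branch_def by blast
      then show "subterm_at X (map (\<lambda>i. f (Suc i)) [0..<n]) \<noteq> None"
        unfolding prefix subterm_at_Cons[OF X] .
    qed
    then show "\<exists>X. subterm_at M [f 0] = Some X \<and> branch X (\<lambda>n. f (Suc n))" using X by blast
  next
    assume "\<exists>X. subterm_at M [f 0] = Some X \<and> branch X (\<lambda>n. f (Suc n))"
    then obtain X where X: "subterm_at M [f 0] = Some X" "branch X (\<lambda>n. f (Suc n))" by blast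
    show "branch M f" unfolding branch_def
    proof
      fix n show "subterm_at M (map f [0..<n]) \<noteq> None"
        using X unfolding branch_def by (cases n) (simp, metis prefix subterm_at_Cons[OF X(1)])
    qed
  qed
qed

lemma branch_Lam_iff:
  "branch (Lam P) f \<longleftrightarrow> f 0 = DLam \<and> branch P (\<lambda>n. f (Suc n))"
  by (subst branch_Cons_iff) (cases "f 0"; simp)

lemma branch_App_iff:
  "branch (App P Q) f
    \<longleftrightarrow> (f 0 = DFun \<and> branch P (\<lambda>n. f (Suc n))) \<or> (f 0 = DArg
      \<and> branch Q (\<lambda>n. f (Suc n)))"
  by (subst branch_Cons_iff) (cases "f 0"; simp)

lemma Lam_in_Lambda001_iff: "Lam P \<in> Lambda001 \<longleftrightarrow> P \<in> Lambda001"
proof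
  assume a: "Lam P \<in> Lambda001"
  show "P \<in> Lambda001" unfolding Lambda001_iff_branch
  proof (intro allI impI)
    fix f assume "branch P f"
    then have "branch (Lam P) (case_nat DLam f)" by (simp add: branch_Lam_iff)
    then show "inf_often_arg f" using a inf_often_arg_Suc_iff[of "case_nat DLam f"]
      by (simp add: Lambda001_iff_branch)
  qed
next
  assume "P \<in> Lambda001"
  then show "Lam P \<in> Lambda001"
    using inf_often_arg_Suc_iff by (auto simp: Lambda001_iff_branch branch_Lam_iff)
qed

lemma App_in_Lambda001_iff:
  "App P Q \<in> Lambda001 \<longleftrightarrow> P \<in> Lambda001 \<and> Q \<in> Lambda001"
proof
  assume a: "App P Q \<in> Lambda001"
  show "P \<in> Lambda001 \<and> Q \<in> Lambda001" unfolding Lambda001_iff_branch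
  proof (intro conjI allI impI)
    fix f assume "branch P f"
    then have "branch (App P Q) (case_nat DFun f)" by (simp add: branch_App_iff)
    then show "inf_often_arg f" using a inf_often_arg_Suc_iff[of "case_nat DFun f"]
      by (simp add: Lambda001_iff_branch)
  next
    fix f assume "branch Q f"
    then have "branch (App P Q) (case_nat DArg f)" by (simp add: branch_App_iff)
    then show "inf_often_arg f" using a inf_often_arg_Suc_iff[of "case_nat DArg f"]
      by (simp add: Lambda001_iff_branch)
  qed
next
  assume "P \<in> Lambda001 \<and> Q \<in> Lambda001"
  then show "App P Q \<in> Lambda001"
    using inf_often_arg_Suc_iff by (auto simp: Lambda001_iff_branch branch_App_iff)
qed

definition graft_pos :: "tm \<Rightarrow> tm \<Rightarrow> dir list \<Rightarrow> bool" where
  "graft_pos M N p \<longleftrightarrow> subterm_at M p \<noteq> None \<or>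
     (\<exists>p1 p2 x. p = p1 @ p2 \<and> subterm_at M p1 = Some (Var x) \<and> subterm_at N p2 \<noteq> None)"

lemma graft_pos_Cons:
  assumes "subterm_at M [d] = Some P" and "graft_pos P N ps"
  shows "graft_pos M N (d # ps)"
proof -
  have "subterm_at M (d # q) = subterm_at P q" for q using assms(1) by (rule subterm_at_Cons)
  then show ?thesis using assms(2) unfolding graft_pos_def by (metis append_Cons)
qed

lemma graft_pos_lift_iff: "graft_pos M (lift k N) p \<longleftrightarrow> graft_pos M N p"
  by (simp add: graft_pos_def subterm_at_lift_eq_None_iff)

lemma graft_pos_subst: "subterm_at (subst k N M) p \<noteq> None \<Longrightarrow> graft_pos M N p"
proof (induction p arbitrary: k N M)
  case Nil
  then show ?case by (simp add: graft_pos_def)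
next
  case (Cons d ps)
  show ?case
  proof (cases M)
    case (Var n)
    show ?thesis
    proof (cases "n = k")
      case True
      then have "subterm_at N (d # ps) \<noteq> None" using Cons.prems Var by simp
      then show ?thesis unfolding graft_pos_def
        by (intro disjI2 exI[of _ "[]"] exI[of _ "d # ps"] exI[of _ n]) (simp add: Var)
    qed (use Cons.prems Var in \<open>cases d; simp\<close>)
  next
    case (Lam P)
    then show ?thesis using Cons.prems Cons.IH[of "Suc k" "lift 0 N" P] graft_pos_Cons[of M d P N ps]
      by (cases d) (auto simp: graft_pos_lift_iff)
  next
    case (App P Q)
    then show ?thesis
      using Cons.prems Cons.IH[of k N P] Cons.IH[of k N Q] graft_pos_Cons[of M d P N ps]
        graft_pos_Cons[of M d Q N ps]
      by (cases d) auto
  qed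
qed

lemma subterm_at_append_None: "subterm_at M p = None \<Longrightarrow> subterm_at M (p @ q) = None"
  by (simp add: subterm_at_append)

lemma map_upt_shift: "map (\<lambda>i. f (l + i)) [0..<m] = map f [l..<l + m]"
proof -
  have "[l..<l + m] = map (\<lambda>i. i + l) [0..<m]" by (simp add: map_add_upt add.commute)
  then show ?thesis by (simp add: comp_def add.commute)
qed

lemma subterm_at_upt_None_mono:
  "a \<le> b \<Longrightarrow> subterm_at M (map f [0..<a]) = None \<Longrightarrow> subterm_at M (map f [0..<b]) = None"
proof -
  assume ab: "a \<le> b" and n: "subterm_at M (map f [0..<a]) = None"
  have "[0..<b] = [0..<a] @ [a..<b]" using upt_add_eq_append[of 0 a "b - a"] ab by simp
  then show ?thesis using subterm_at_append_None[OF n, of "map f [a..<b]"] by simp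
qed

text \<open>The branch leaves \<open>M\<close> through a variable of \<open>M\<close>, which sits at the last depth \<open>l\<close> at which
  the branch is still a position of \<open>M\<close>.\<close>
lemma branch_subst_leaves:
  assumes b: "branch (subst k N M) f" and nb: "\<not> branch M f"
  shows "\<exists>l. branch N (\<lambda>i. f (l + i))"
proof -
  let ?P = "\<lambda>n. subterm_at M (map f [0..<n]) \<noteq> None"
  obtain n0 where "\<not> ?P n0" using nb unfolding branch_def by blast
  define m where "m = (LEAST n. \<not> ?P n)"
  have m: "\<not> ?P m" "\<And>n. n < m \<Longrightarrow> ?P n"
    unfolding m_def using \<open>\<not> ?P n0\<close> by (fact LeastI, blast dest: not_less_Least)
  obtain l where l: "m = Suc l" using m(1) by (cases m) auto
  have notP: "\<not> ?P n" if "n > l" for n using subterm_at_upt_None_mono[of m n] m(1) l that by simp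
  have key: "subterm_at N (map f [l..<n]) \<noteq> None" if nl: "n > l" for n
  proof -
    have "graft_pos M N (map f [0..<n])" using graft_pos_subst b unfolding branch_def by blast
    then obtain p1 p2 x where h: "map f [0..<n] = p1 @ p2" "subterm_at M p1 = Some (Var x)"
      "subterm_at N p2 \<noteq> None"
      using notP[OF nl] unfolding graft_pos_def by blast
    define j where "j = length p1"
    have jn: "j \<le> n" using arg_cong[OF h(1), of length] by (simp add: j_def)
    have "p1 = take j (map f [0..<n])" "p2 = drop j (map f [0..<n])" using h(1) by (simp_all add: j_def)
    then have p1: "p1 = map f [0..<j]" and p2: "p2 = map f [j..<n]" using jn
      by (simp_all add: take_map drop_map)
    have "j = l"
    proof (rule ccontr)
      assume "j \<noteq> l"
      moreover have "\<not> j > l" using notP[of j] h(2) p1 by auto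
      ultimately have "?P (Suc j)" using m(2)[of "Suc j"] l by linarith
      then show False using h(2) p1 subterm_at_append[of M p1 "[f j]"] by (cases "f j") simp_all
    qed
    then show ?thesis using h(3) p2 by simp
  qed
  have "branch N (\<lambda>i. f (l + i))" unfolding branch_def
  proof
    fix n
    have "subterm_at N (map f [l..<l + n] @ [f (l + n)]) \<noteq> None" using key[of "Suc (l + n)"] by simp
    then have "subterm_at N (map f [l..<l + n]) \<noteq> None"
      using subterm_at_append_None[of N "map f [l..<l + n]" "[f (l + n)]"] by (rule contrapos_nn)
    then show "subterm_at N (map (\<lambda>i. f (l + i)) [0..<n]) \<noteq> None" by (simp add: map_upt_shift)
  qed
  then show ?thesis by blast
qed

lemma subst_in_Lambda001:
  assumes "M \<in> Lambda001" and "N \<in> Lambda001"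
  shows "subst k N M \<in> Lambda001"
  unfolding Lambda001_iff_branch
proof (intro allI impI)
  fix f assume b: "branch (subst k N M) f"
  show "inf_often_arg f"
  proof (cases "branch M f")
    case False
    then obtain l where "branch N (\<lambda>i. f (l + i))" using branch_subst_leaves[OF b] by blast
    then show ?thesis using assms(2) inf_often_arg_shiftD by (auto simp: Lambda001_iff_branch)
  qed (use assms(1) in \<open>simp add: Lambda001_iff_branch\<close>)
qed
lemma hred_Lambda001: "hred M M' \<Longrightarrow> M \<in> Lambda001 \<Longrightarrow> M' \<in> Lambda001"
  by (induction rule: hred.induct)
    (auto simp: App_in_Lambda001_iff Lam_in_Lambda001_iff subst0_def intro: subst_in_Lambda001)

lemma hred_rtranclp_Lambda001:
  "hred\<^sup>*\<^sup>* M M' \<Longrightarrow> M \<in> Lambda001 \<Longrightarrow> M' \<in> Lambda001"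
  by (induction rule: rtranclp_induct) (auto intro: hred_Lambda001)

text \<open>The leftmost branch, through bodies and function positions, never enters an argument, so it is
  finite for terms of \<open>\<Lambda>\<^sup>0\<^sup>0\<^sup>1\<close>.\<close>
inductive finite_spine :: "tm \<Rightarrow> bool" where
  "finite_spine (Var x)"
| "finite_spine P \<Longrightarrow> finite_spine (Lam P)"
| "finite_spine P \<Longrightarrow> finite_spine (App P Q)"

definition spine_child :: "tm \<Rightarrow> tm" where
  "spine_child M = (case M of Var x \<Rightarrow> Var x | Lam P \<Rightarrow> P | App P Q \<Rightarrow> P)"

definition spine_dir :: "tm \<Rightarrow> dir" where
  "spine_dir M = (case M of Var x \<Rightarrow> DArg | Lam P \<Rightarrow> DLam | App P Q \<Rightarrow> DFun)"

lemma not_finite_spine_step: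
  "\<not> finite_spine M \<Longrightarrow>
     \<not> finite_spine (spine_child M) \<and> subterm_at M [spine_dir M] = Some (spine_child M) \<and> spine_dir M \<noteq> DArg"
  by (cases M) (auto simp: spine_child_def spine_dir_def intro: finite_spine.intros)

lemma Lambda001_finite_spine: "M \<in> Lambda001 \<Longrightarrow> finite_spine M"
proof (rule ccontr)
  assume M: "M \<in> Lambda001" and inf: "\<not> finite_spine M"
  define g where "g n = (spine_child ^^ n) M" for n
  have g: "\<not> finite_spine (g n)" for n
    by (induction n) (use inf not_finite_spine_step in \<open>auto simp: g_def\<close>)
  define f where "f n = spine_dir (g n)" for n
  have "subterm_at M (map f [0..<n]) = Some (g n)" for n
  proof (induction n)
    case (Suc n)
    have "subterm_at M (map f [0..<Suc n]) = subterm_at (g n) [f n]"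
      using subterm_at_append[of M "map f [0..<n]" "[f n]"] Suc by simp
    also have "\<dots> = Some (g (Suc n))" using not_finite_spine_step[OF g[of n]] by (simp add: f_def g_def)
    finally show ?case .
  qed (simp add: g_def)
  then have "branch M f" by (simp add: branch_def)
  then obtain m where "f m = DArg" using M by (auto simp: Lambda001_iff_branch inf_often_arg_def)
  then show False using not_finite_spine_step[OF g[of m]] by (simp add: f_def)
qed

lemma inf_step_refl:
  "finite_spine M \<Longrightarrow> M \<in> Lambda001
    \<Longrightarrow> (\<forall>Q\<in>Lambda001. R Q Q) \<Longrightarrow> inf_step R M M"
  by (induction rule: finite_spine.induct)
    (auto simp: Lam_in_Lambda001_iff App_in_Lambda001_iff intro: inf_step.intros)

lemma beta_inf_refl: "M \<in> Lambda001 \<Longrightarrow> beta_inf M M"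
proof (coinduction arbitrary: M rule: beta_inf.coinduct)
  case (beta_inf M)
  have "inf_step (\<lambda>x y. (\<exists>M. x = M \<and> y = M \<and> M \<in> Lambda001) \<or> beta_inf x y) M M"
    by (rule inf_step_refl) (use beta_inf Lambda001_finite_spine in auto)
  then show ?case by blast
qed

section \<open>Infinitary reduction to head normal form\<close>

lemma hred_beta: "hred M M' \<Longrightarrow> beta M M'"
  by (induction rule: hred.induct) (auto intro: beta.intros)

lemma hred_rtranclp_beta_rtranclp: "hred\<^sup>*\<^sup>* M M' \<Longrightarrow> beta\<^sup>*\<^sup>* M M'"
  by (induction rule: rtranclp_induct) (auto intro: hred_beta rtranclp.rtrancl_into_rtrancl)

lemma beta_rtranclp_Lam: "beta\<^sup>*\<^sup>* P P' \<Longrightarrow> beta\<^sup>*\<^sup>* (Lam P) (Lam P')"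
  by (rule rtranclp_map[where f=Lam]) (rule beta.lam)

lemma beta_rtranclp_App_fun:
  "beta\<^sup>*\<^sup>* P P' \<Longrightarrow> beta\<^sup>*\<^sup>* (App P Q) (App P' Q)"
  by (rule rtranclp_map[where f="\<lambda>x. App x Q"]) (rule beta.appL)

lemma inf_step_beta_rtranclp:
  "beta\<^sup>*\<^sup>* M N \<Longrightarrow> inf_step R N N' \<Longrightarrow> inf_step R M N'"
proof -
  assume b: "beta\<^sup>*\<^sup>* M N" and i: "inf_step R N N'"
  from i show ?thesis
  proof cases
    case (ivar x)
    then show ?thesis using rtranclp_trans[OF b ivar(2)] inf_step.ivar by simp
  next
    case (ilam P P')
    then show ?thesis using rtranclp_trans[OF b ilam(2)] inf_step.ilam by simp
  next
    case (iapp P Q P' Q')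
    then show ?thesis using rtranclp_trans[OF b iapp(2)] inf_step.iapp by simp
  qed
qed

lemma beta_inf_beta_rtranclp:
  "beta\<^sup>*\<^sup>* M N \<Longrightarrow> beta_inf N N' \<Longrightarrow> beta_inf M N'"
proof -
  assume b: "beta\<^sup>*\<^sup>* M N" and i: "beta_inf N N'"
  from i have "inf_step beta_inf N N'" by (cases rule: beta_inf.cases)
  then show ?thesis using inf_step_beta_rtranclp[OF b] by (blast intro: beta_inf.intros)
qed

text \<open>The head variable of a limit is reached after finitely many steps, since the derivation of
  \<open>inf_step\<close> is finite along the spine.\<close>
lemma inf_step_hnf:
  "inf_step beta_inf M N \<Longrightarrow>
     (head_var_spine N \<longrightarrow> (\<exists>N0. beta\<^sup>*\<^sup>* M N0 \<and> head_var_spine N0)) \<and>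
     (hnf N \<longrightarrow> (\<exists>N0. beta\<^sup>*\<^sup>* M N0 \<and> hnf N0))"
proof (induction rule: inf_step.induct)
  case (ivar M x)
  then show ?case using head_var_spine.intros(1) hnf_Var by blast
next
  case (ilam M P P')
  have "\<exists>N0. beta\<^sup>*\<^sup>* M N0 \<and> hnf N0" if "hnf (Lam P')"
  proof -
    have "hnf P'" using that by (simp add: hnf_Lam_iff)
    then obtain P0 where "beta\<^sup>*\<^sup>* P P0" "hnf P0" using ilam.IH by blast
    then have "beta\<^sup>*\<^sup>* M (Lam P0)" "hnf (Lam P0)"
      using rtranclp_trans[OF ilam.hyps(1) beta_rtranclp_Lam] hnf.intros(2) by auto
    then show ?thesis by blast
  qed
  then show ?case by simp
next
  case (iapp M P Q P' Q')
  have hvs: "\<exists>N0. beta\<^sup>*\<^sup>* M N0 \<and> head_var_spine N0" if hP: "head_var_spine P'"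
  proof -
    obtain P0 where P0: "beta\<^sup>*\<^sup>* P P0" "head_var_spine P0" using iapp.IH hP by blast
    have "beta\<^sup>*\<^sup>* M (App P0 Q)"
      using rtranclp_trans[OF iapp.hyps(1) beta_rtranclp_App_fun[OF P0(1)]] .
    moreover have "head_var_spine (App P0 Q)" using P0(2) by (simp add: head_var_spine_App_iff)
    ultimately show ?thesis by blast
  qed
  show ?case
  proof (intro conjI impI)
    assume "head_var_spine (App P' Q')"
    then show "\<exists>N0. beta\<^sup>*\<^sup>* M N0 \<and> head_var_spine N0" using hvs
      by (simp add: head_var_spine_App_iff)
  next
    assume "hnf (App P' Q')"
    then obtain N0 where "beta\<^sup>*\<^sup>* M N0" "head_var_spine N0" using hvs by (auto simp: hnf_App_iff)
    then show "\<exists>N0. beta\<^sup>*\<^sup>* M N0 \<and> hnf N0" using hnf.intros(1) by blast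
  qed
qed

lemma beta_inf_hnf_beta_rtranclp:
  "beta_inf M N \<Longrightarrow> hnf N
    \<Longrightarrow> \<exists>N0. beta\<^sup>*\<^sup>* M N0 \<and> hnf N0"
  using inf_step_hnf by (auto elim: beta_inf.cases)

theorem mainTheorem10:
  assumes "M \<in> Lambda001"
  shows "((\<exists>N\<in>Lambda001. hnf N \<and> beta_inf M N) \<longleftrightarrow> (\<exists>s\<in>Taylor M. nf_r s \<noteq> {}))
       \<and> ((\<exists>s\<in>Taylor M. nf_r s \<noteq> {}) \<longleftrightarrow> (\<exists>N\<in>Lambda001. hnf N \<and> hred\<^sup>*\<^sup>* M N))"
proof -
  have "\<exists>s\<in>Taylor M. nf_r s \<noteq> {}" if "\<exists>N\<in>Lambda001. hnf N \<and> beta_inf M N"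
    using that beta_inf_hnf_beta_rtranclp taylor_nf_r_nonempty_if_beta_hnf by (fastforce simp: Taylor_def)
  moreover have "\<exists>N\<in>Lambda001. hnf N \<and> hred\<^sup>*\<^sup>* M N" if "\<exists>s\<in>Taylor M. nf_r s \<noteq> {}"
    using that hred_hnf_if_taylor_nf_r_nonempty hred_rtranclp_Lambda001 assms by (fastforce simp: Taylor_def)
  moreover have "\<exists>N\<in>Lambda001. hnf N \<and> beta_inf M N" if "\<exists>N\<in>Lambda001. hnf N \<and> hred\<^sup>*\<^sup>* M N"
    using that beta_inf_beta_rtranclp hred_rtranclp_beta_rtranclp beta_inf_refl by blast
  ultimately show ?thesis by blast
qed

end
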